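(* Let $n>10$, $S=\{1,2,4\}\subset\mathbb Z_n$, and $\mathbb K$ a field of characteristic $0$ containing the $n$-th roots of unity. For $\lambda^n=1$: $H_0^{(\lambda)}\cong H_1^{(\lambda)}\cong\mathbb K$ if $\lambda=1$ and $H_0^{(\lambda)}=H_1^{(\lambda)}=0$ if $\lambda\ne1$, and $H_m^{(\lambda)}=0$ for all $m\ge2$. Consequently \[H_m^{\mathrm{path}}(\vec C_n^{1,2,4};\mathbb K)\cong\begin{cases}\mathbb K & m=0,1,\\ 0 & m\ge2.\end{cases}\]
   Context: GLMY path complex over a field $\mathbb K$ of characteristic $0$: elementary paths $e_{v_0\cdots v_n}$, boundary $\partial e_{v_0\cdots v_n}=\sum_{j}(-1)^j e_{v_0\cdots\widehat{v_j}\cdots v_n}$, paths with two equal consecutive vertices set to $0$; $A_n(G)$ = span of paths along arrows of $G$; $\Omega_0=A_0$, $\Omega_1=A_1$, $\Omega_n=\{u\in A_n:\partial u\in A_{n-1}\}$; $H^{\mathrm{path}}_m$ is the homology of $(\Omega_*,\partial)$. The circulant digraph $\vec{C}_n^S$ has vertex set $\mathbb Z_n$ and arrows $a\to a+s$, $s\in S$. $\tau$ is the chain automorphism induced by $a\mapsto a+1$, $\Omega_m^{(\lambda)}=\{\alpha\in\Omega_m:\tau\alpha=\lambda\alpha\}$ and $H_m^{(\lambda)}=H_m(\Omega_*^{(\lambda)},\partial)$. *)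

theory Defs
  imports Main
begin

(* Chains of the (regular) GLMY path complex on the vertex set Z_n = {0..<n}:
   a chain is a coefficient function on vertex sequences (elementary paths
   e_{v_0...v_m} correspond to lists [v_0,...,v_m]). *)

type_synonym 'k chain = "nat list \<Rightarrow> 'k"

definition regular_path :: "nat list \<Rightarrow> bool" where
  "regular_path xs \<longleftrightarrow> (\<forall>i. Suc i < length xs \<longrightarrow> xs ! i \<noteq> xs ! Suc i)"

definition vpaths :: "nat \<Rightarrow> nat \<Rightarrow> nat list set" where
  "vpaths n k = {xs. length xs = k \<and> set xs \<subseteq> {..<n}}"

definition chains :: "nat \<Rightarrow> nat \<Rightarrow> ('k::field) chain set" where
  "chains n m = {u. \<forall>xs. u xs \<noteq> 0 \<longrightarrow> xs \<in> vpaths n (Suc m) \<and> regular_path xs}"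

(* boundary: \<partial> e_{v_0..v_m} = \<Sum>_j (-1)^j e_{v_0..\<widehat>v_j..v_m}, non-regular paths set to 0;
   the boundary of a vertex (0-path) is 0 *)
definition bd :: "nat \<Rightarrow> ('k::field) chain \<Rightarrow> 'k chain" where
  "bd n u = (\<lambda>ys. if ys \<noteq> [] \<and> regular_path ys \<and> set ys \<subseteq> {..<n} then
      (\<Sum>xs\<in>vpaths n (Suc (length ys)). \<Sum>j<length xs.
          (if take j xs @ drop (Suc j) xs = ys then (-1) ^ j * u xs else 0))
    else 0)"

definition circ_arrow :: "nat \<Rightarrow> nat set \<Rightarrow> nat \<Rightarrow> nat \<Rightarrow> bool" where
  "circ_arrow n S a b \<longleftrightarrow> a < n \<and> b < n \<and> (\<exists>s\<in>S. b = (a + s) mod n)"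

definition allowed_path :: "nat \<Rightarrow> nat set \<Rightarrow> nat list \<Rightarrow> bool" where
  "allowed_path n S xs \<longleftrightarrow> (\<forall>i. Suc i < length xs \<longrightarrow> circ_arrow n S (xs ! i) (xs ! Suc i))"

definition Apaths :: "nat \<Rightarrow> nat set \<Rightarrow> nat \<Rightarrow> ('k::field) chain set" where
  "Apaths n S m = {u \<in> chains n m. \<forall>xs. u xs \<noteq> 0 \<longrightarrow> allowed_path n S xs}"

definition Omega :: "nat \<Rightarrow> nat set \<Rightarrow> nat \<Rightarrow> ('k::field) chain set" where
  "Omega n S m = (if m = 0 then Apaths n S 0
     else {u \<in> Apaths n S m. bd n u \<in> Apaths n S (m - 1)})"

(* \<tau>: chain map induced by a \<mapsto> a+1 (mod n): \<tau> e_{v_0..v_m} = e_{v_0+1..v_m+1} *)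
definition tau :: "nat \<Rightarrow> ('k::field) chain \<Rightarrow> 'k chain" where
  "tau n u = (\<lambda>ys. if set ys \<subseteq> {..<n} then u (map (\<lambda>v. (v + n - 1) mod n) ys) else 0)"

definition Omega_eig :: "nat \<Rightarrow> nat set \<Rightarrow> 'k::field \<Rightarrow> nat \<Rightarrow> 'k chain set" where
  "Omega_eig n S lam m = {a \<in> Omega n S m. tau n a = (\<lambda>xs. lam * a xs)}"

definition cycles :: "nat \<Rightarrow> (nat \<Rightarrow> ('k::field) chain set) \<Rightarrow> nat \<Rightarrow> 'k chain set" where
  "cycles n Om m = {u \<in> Om m. bd n u = (\<lambda>_. 0)}"

definition boundaries :: "nat \<Rightarrow> (nat \<Rightarrow> ('k::field) chain set) \<Rightarrow> nat \<Rightarrow> 'k chain set" where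
  "boundaries n Om m = bd n ` Om (Suc m)"

definition homology_zero :: "nat \<Rightarrow> (nat \<Rightarrow> ('k::field) chain set) \<Rightarrow> nat \<Rightarrow> bool" where
  "homology_zero n Om m \<longleftrightarrow> cycles n Om m \<subseteq> boundaries n Om m"

(* H_m \<cong> K: the quotient Z_m / B_m is one-dimensional, spanned by the class of z *)
definition homology_iso_field :: "nat \<Rightarrow> (nat \<Rightarrow> ('k::field) chain set) \<Rightarrow> nat \<Rightarrow> bool" where
  "homology_iso_field n Om m \<longleftrightarrow>
     (\<exists>z\<in>cycles n Om m. z \<notin> boundaries n Om m \<and>
        (\<forall>w\<in>cycles n Om m. \<exists>c. (\<lambda>xs. w xs - c * z xs) \<in> boundaries n Om m))"

end

theory Submission
  imports Defs
begin

text \<open>Write a path of the circulant digraph as a start vertex and a word of steps in \<open>{1,2,4}\<close>.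
  Deleting an inner vertex merges two consecutive steps \<open>s, t\<close> into \<open>s + t\<close>. For \<open>n > 10\<close> the sums
  \<open>3, 5, 6, 8\<close> are not steps, so \<open>\<partial>\<close>-invariance forces an element of \<open>\<Omega>\<close> to be alternating
  under swapping adjacent distinct steps and to vanish on words containing \<open>4, 4\<close>. Hence \<open>\<Omega>\<^sub>m\<close>
  is parametrised by \<open>n\<close>-periodic coefficient functions on the sorted words \<open>1\<^sup>a 2\<^sup>b 4\<^sup>e\<close> with
  \<open>e \<le> 1\<close>; \<open>\<tau>\<close> becomes a shift of the start vertex and \<open>\<partial>\<close> an explicit difference operator
  in which only the merges \<open>1 + 1 = 2\<close> and \<open>2 + 2 = 4\<close> survive. This coefficient complex is
  exact in degrees \<open>\<ge> 2\<close> by triangular elimination, and in degrees 0 and 1 its homology is spanned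
  by the constant function and by the indicator of the one-letter word \<open>1\<close>, which are detected by sums over a period.
  For the eigenspace of \<open>\<lambda>\<close>, a primitive is averaged over the period with weights \<open>\<lambda>\<^sup>k\<close>.\<close>

section \<open>Paths as walks\<close>

abbreviation S124 :: "nat set" where "S124 \<equiv> {1,2,4}"

fun walk :: "nat \<Rightarrow> nat \<Rightarrow> nat list \<Rightarrow> nat list" where
  "walk n v [] = [v]"
| "walk n v (s#\<sigma>) = v # walk n ((v+s) mod n) \<sigma>"

fun walk_end :: "nat \<Rightarrow> nat \<Rightarrow> nat list \<Rightarrow> nat" where
  "walk_end n v [] = v"
| "walk_end n v (s#\<sigma>) = walk_end n ((v+s) mod n) \<sigma>"

fun steps :: "nat \<Rightarrow> nat list \<Rightarrow> nat list" where
  "steps n (x#y#r) = ((y + n - x) mod n) # steps n (y#r)"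
| "steps n _ = []"

lemma length_walk[simp]: "length (walk n v \<sigma>) = Suc (length \<sigma>)"
  by (induction \<sigma> arbitrary: v) auto

lemma hd_walk[simp]: "hd (walk n v \<sigma>) = v"
  by (cases \<sigma>) auto

lemma walk_not_Nil[simp]: "walk n v \<sigma> \<noteq> []"
  by (cases \<sigma>) auto

lemma walk_append: "walk n v (\<alpha> @ \<beta>) = butlast (walk n v \<alpha>) @ walk n (walk_end n v \<alpha>) \<beta>"
  by (induction \<alpha> arbitrary: v) auto

lemma last_walk[simp]: "last (walk n v \<sigma>) = walk_end n v \<sigma>"
  by (induction \<sigma> arbitrary: v) auto

lemma walk_snoc: "walk n v (\<sigma> @ [s]) = walk n v \<sigma> @ [(walk_end n v \<sigma> + s) mod n]"
proof -
  have "walk n v (\<sigma> @ [s]) = butlast (walk n v \<sigma>) @ walk n (walk_end n v \<sigma>) [s]" by (rule walk_append)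
  also have "\<dots> = butlast (walk n v \<sigma>) @ [last (walk n v \<sigma>)] @ [(walk_end n v \<sigma> + s) mod n]" by simp
  also have "\<dots> = walk n v \<sigma> @ [(walk_end n v \<sigma> + s) mod n]"
    by (metis append_assoc append_butlast_last_id walk_not_Nil)
  finally show ?thesis .
qed

lemma set_walk: "v < n \<Longrightarrow> set (walk n v \<sigma>) \<subseteq> {..<n}"
  by (induction \<sigma> arbitrary: v) auto

lemma walk_split_nth:
  assumes "k < length \<tau>"
  shows "walk n v \<tau> = butlast (walk n v (take k \<tau>)) @ walk_end n v (take k \<tau>) #
     walk n ((walk_end n v (take k \<tau>) + \<tau>!k) mod n) (drop (Suc k) \<tau>)"
proof -
  have "\<tau> = take k \<tau> @ (\<tau>!k) # drop (Suc k) \<tau>" using assms by (simp add: id_take_nth_drop)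
  then have "walk n v \<tau> = walk n v (take k \<tau> @ (\<tau>!k) # drop (Suc k) \<tau>)" by simp
  also have "\<dots> = butlast (walk n v (take k \<tau>)) @ walk n (walk_end n v (take k \<tau>)) ((\<tau>!k) # drop (Suc k) \<tau>)"
    by (rule walk_append)
  finally show ?thesis by simp
qed

lemma int_add_diff_mod: "a < n \<Longrightarrow> b \<le> n \<Longrightarrow> int ((a + n - b) mod n) = (int a - int b) mod int n"
proof -
  assume ab: "a < n" "b \<le> n"
  have "int ((a + n - b) mod n) = (int a + int n - int b) mod int n"
    using ab by (simp add: zmod_int of_nat_diff)
  also have "int a + int n - int b = (int a - int b) + int n" by simp
  also have "((int a - int b) + int n) mod int n = (int a - int b) mod int n" by (rule mod_add_self2)
  finally show ?thesis .
qed

lemma mod_add_step: "v < n \<Longrightarrow> w < n \<Longrightarrow> (v + (w + n - v) mod n) mod n = (w::nat)"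
proof -
  assume a: "v < n" "w < n"
  have "(v + (w + n - v) mod n) mod n = (v + (w + n - v)) mod n" by (simp add: mod_add_right_eq)
  also have "v + (w + n - v) = w + n" using a by simp
  finally show ?thesis using a by simp
qed

lemma step_mod_add: "v < n \<Longrightarrow> s < n \<Longrightarrow> ((v + s) mod n + n - v) mod n = (s::nat)"
proof -
  assume a: "v < n" "s < n"
  have n0: "n > 0" using a by simp
  have "int (((v + s) mod n + n - v) mod n) = ((int v + int s) mod int n + int n - int v) mod int n"
    using a by (simp add: zmod_int of_nat_diff)
  also have "\<dots> = ((int v + int s) mod int n + (int n - int v)) mod int n" by (simp add: algebra_simps)
  also have "\<dots> = (int v + int s + (int n - int v)) mod int n" by (rule mod_add_left_eq)
  also have "\<dots> = int s" using a by simp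
  finally show ?thesis by simp
qed

lemma mod_add_sub_mod: "w < n \<Longrightarrow> s \<le> n \<Longrightarrow> ((w + s) mod n + n - s) mod n = (w::nat)"
proof -
  assume a: "w < n" "s \<le> n"
  have "(w + s) mod n + n - s = (w + s) mod n + (n - s)" using a by simp
  then have "((w + s) mod n + n - s) mod n = ((w + s) mod n + (n - s)) mod n" by simp
  also have "\<dots> = (w + s + (n - s)) mod n" by (rule mod_add_left_eq)
  also have "w + s + (n - s) = w + n" using a by simp
  finally show ?thesis using a by simp
qed

lemma mod_sub_add_mod: "v < n \<Longrightarrow> s \<le> n \<Longrightarrow> ((v + n - s) mod n + s) mod n = (v::nat)"
proof -
  assume a: "v < n" "s \<le> n"
  have "((v + n - s) mod n + s) mod n = ((v + n - s) + s) mod n" by (simp add: mod_add_left_eq)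
  also have "(v + n - s) + s = v + n" using a by simp
  finally show ?thesis using a by simp
qed

lemma mod_add_mod_assoc: "((e + s) mod n + t) mod n = (e + (s + t) mod n) mod (n::nat)"
proof -
  have "((e + s) mod n + t) mod n = (e + s + t) mod n" by (rule mod_add_left_eq)
  also have "\<dots> = (e + (s + t)) mod n" by (simp only: add.assoc)
  also have "\<dots> = (e + (s + t) mod n) mod n" by (rule mod_add_right_eq[symmetric])
  finally show ?thesis .
qed

lemma zdvd_abs_less_imp_0: "\<bar>d\<bar> < int n \<Longrightarrow> int n dvd (d::int) \<Longrightarrow> d = 0"
  using dvd_abs_iff zdvd_not_zless zero_less_abs_iff by blast

lemma mod_add_left_inj_less: "x < n \<Longrightarrow> y < n \<Longrightarrow> (v + x) mod n = (v + y) mod n \<Longrightarrow> x = (y::nat)"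
proof -
  assume a: "x < n" "y < n" "(v + x) mod n = (v + y) mod n"
  have "(int v + int x) mod int n = (int v + int y) mod int n"
    using a(3) by (metis of_nat_add zmod_int)
  then have "int n dvd (int v + int x) - (int v + int y)" by (simp add: mod_eq_dvd_iff)
  then have d: "int n dvd int x - int y" by simp
  have "\<bar>int x - int y\<bar> < int n" using a(1,2) by linarith
  then have "int x - int y = 0" using d zdvd_abs_less_imp_0 by blast
  then show "x = y" by simp
qed

lemma inj_on_sub_mod_S124: "4 < n \<Longrightarrow> inj_on (\<lambda>s. (v + n - s) mod n) S124"
proof (rule inj_onI)
  fix s t assume a: "4 < n" "s \<in> S124" "t \<in> S124" "(v + n - s) mod n = (v + n - t) mod n"
  have st: "s \<le> n" "t \<le> n" using a by auto
  have e1: "v + n - s = v + (n - s)" "v + n - t = v + (n - t)" using st by simp_all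
  have "(v + (n - s)) mod n = (v + (n - t)) mod n" using a(4) unfolding e1 .
  moreover have "n - s < n" "n - t < n" using a by auto
  ultimately have "n - s = n - t" using mod_add_left_inj_less[of "n-s" n "n-t" v] by blast
  then show "s = t" using a by auto
qed

lemma inj_on_add_mod_S124: "4 < n \<Longrightarrow> inj_on (\<lambda>s. (e + s) mod n) S124"
proof (rule inj_onI)
  fix s t assume a: "4 < n" "s \<in> S124" "t \<in> S124" "(e + s) mod n = (e + t) mod n"
  moreover have "s < n" "t < n" using a by auto
  ultimately show "s = t" using mod_add_left_inj_less[of s n t e] by blast
qed

lemma walk_steps: "xs \<noteq> [] \<Longrightarrow> set xs \<subseteq> {..<n} \<Longrightarrow> xs = walk n (hd xs) (steps n xs)"
proof (induction n xs rule: steps.induct)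
  case (1 n x y r)
  then have "y # r = walk n y (steps n (y#r))" by auto
  moreover have "(x + (y + n - x) mod n) mod n = y" using 1(3) by (intro mod_add_step) auto
  ultimately show ?case by simp
qed auto

lemma steps_walk: "v < n \<Longrightarrow> \<forall>s\<in>set \<sigma>. s < n \<Longrightarrow> steps n (walk n v \<sigma>) = \<sigma>"
proof (induction \<sigma> arbitrary: v)
  case Nil then show ?case by simp
next
  case (Cons s \<sigma>)
  have n0: "n > 0" using Cons by simp
  have "steps n (walk n ((v+s) mod n) \<sigma>) = \<sigma>" using Cons n0 by simp
  then show ?case using Cons step_mod_add[of v n s] by (cases \<sigma>) auto
qed

lemma steps_less: "n > 0 \<Longrightarrow> \<forall>s\<in>set (steps n xs). s < n"
  by (induction n xs rule: steps.induct) auto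

lemma length_steps: "length (steps n xs) = length xs - 1"
  by (induction n xs rule: steps.induct) auto

lemma adjacent_Cons2: "(\<forall>i. Suc i < length (x#y#r) \<longrightarrow> P ((x#y#r) ! i) ((x#y#r) ! Suc i))
     \<longleftrightarrow> P x y \<and> (\<forall>i. Suc i < length (y#r) \<longrightarrow> P ((y#r) ! i) ((y#r) ! Suc i))"
proof (intro iffI conjI allI impI)
  assume h: "\<forall>i. Suc i < length (x#y#r) \<longrightarrow> P ((x#y#r) ! i) ((x#y#r) ! Suc i)"
  then show "P x y" using h[rule_format, of 0] by simp
  fix i assume "Suc i < length (y#r)"
  then show "P ((y#r) ! i) ((y#r) ! Suc i)" using h[rule_format, of "Suc i"] by simp
next
  fix i assume a: "P x y \<and> (\<forall>i. Suc i < length (y#r) \<longrightarrow> P ((y#r) ! i) ((y#r) ! Suc i))"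
    "Suc i < length (x#y#r)"
  show "P ((x#y#r) ! i) ((x#y#r) ! Suc i)"
  proof (cases i)
    case 0 then show ?thesis using a by simp
  next
    case (Suc j) then show ?thesis using a(1) a(2) by auto
  qed
qed

lemma allowed_path_Nil[simp]: "allowed_path n S []" and allowed_path_single[simp]: "allowed_path n S [x]"
  by (auto simp: allowed_path_def)

lemma allowed_path_Cons2: "allowed_path n S (x#y#r) \<longleftrightarrow> circ_arrow n S x y \<and> allowed_path n S (y#r)"
  unfolding allowed_path_def by (rule adjacent_Cons2)

lemma regular_path_Nil[simp]: "regular_path []" and regular_path_single[simp]: "regular_path [x]"
  by (auto simp: regular_path_def)

lemma regular_path_Cons2: "regular_path (x#y#r) \<longleftrightarrow> x \<noteq> y \<and> regular_path (y#r)"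
  unfolding regular_path_def by (rule adjacent_Cons2)

lemma allowed_path_middle_arrow: "allowed_path n S (xs @ x # y # zs) \<Longrightarrow> circ_arrow n S x y"
  unfolding allowed_path_def
  by (drule spec[of _ "length xs"]) (simp add: nth_append)

lemma circ_arrow_S124E: "circ_arrow n S124 x y \<Longrightarrow> \<exists>s\<in>S124. y = (x+s) mod n"
  unfolding circ_arrow_def by blast

lemma allowed_walk_iff:
  assumes "v < n" "\<forall>s\<in>set \<sigma>. s < n" "4 < n"
  shows "allowed_path n S124 (walk n v \<sigma>) \<longleftrightarrow> set \<sigma> \<subseteq> S124"
  using assms
proof (induction \<sigma> arbitrary: v)
  case Nil then show ?case by simp
next
  case (Cons s \<sigma>)
  have ih: "allowed_path n S124 (walk n ((v+s) mod n) \<sigma>) \<longleftrightarrow> set \<sigma> \<subseteq> S124"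
    using Cons by simp
  have ca: "circ_arrow n S124 v ((v+s) mod n) \<longleftrightarrow> s \<in> S124"
  proof
    assume "circ_arrow n S124 v ((v+s) mod n)"
    then obtain t where "t \<in> S124" "(v+s) mod n = (v+t) mod n" unfolding circ_arrow_def by blast
    then show "s \<in> S124" using mod_add_left_inj_less[of s n t v] Cons.prems by auto
  next
    assume "s \<in> S124" then show "circ_arrow n S124 v ((v+s) mod n)"
      unfolding circ_arrow_def using Cons.prems by auto
  qed
  have e: "allowed_path n S124 (walk n v (s#\<sigma>)) \<longleftrightarrow> circ_arrow n S124 v ((v+s) mod n) \<and> allowed_path n S124 (walk n ((v+s) mod n) \<sigma>)"
    by (cases \<sigma>) (auto simp: allowed_path_Cons2)
  show ?case using e ca ih by auto
qed

lemma regular_walk: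
  assumes "v < n" "\<forall>s\<in>set \<sigma>. 0 < s \<and> s < n"
  shows "regular_path (walk n v \<sigma>)"
  using assms
proof (induction \<sigma> arbitrary: v)
  case Nil then show ?case by simp
next
  case (Cons s \<sigma>)
  have "v \<noteq> (v+s) mod n" using Cons.prems mod_add_left_inj_less[of 0 n s v] by auto
  moreover have "regular_path (walk n ((v+s) mod n) \<sigma>)" using Cons by simp
  ultimately show ?case by (cases \<sigma>) (simp_all add: regular_path_Cons2)
qed

lemma allowed_path_walk_steps:
  assumes "xs \<noteq> []" "set xs \<subseteq> {..<n}" "allowed_path n S124 xs" "4 < n"
  shows "xs = walk n (hd xs) (steps n xs) \<and> set (steps n xs) \<subseteq> S124 \<and> hd xs < n"
proof -
  have e: "xs = walk n (hd xs) (steps n xs)" using walk_steps assms by blast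
  have h: "hd xs < n" using assms by (cases xs) auto
  have "set (steps n xs) \<subseteq> S124"
    using allowed_walk_iff[OF h steps_less[of n xs]] assms e by auto
  then show ?thesis using e h by auto
qed

lemma allowed_path_iff_steps:
  assumes "ys \<noteq> []" "set ys \<subseteq> {..<n}" "4 < n"
  shows "allowed_path n S124 ys \<longleftrightarrow> set (steps n ys) \<subseteq> S124"
proof -
  have e: "ys = walk n (hd ys) (steps n ys)" using walk_steps assms by blast
  have h: "hd ys < n" using assms by (cases ys) auto
  have "\<forall>s\<in>set (steps n ys). s < n" using steps_less assms by simp
  then show ?thesis using allowed_walk_iff[OF h _ assms(3)] e by metis
qed

lemma allowed_path_regular:
  assumes "xs \<noteq> []" "set xs \<subseteq> {..<n}" "allowed_path n S124 xs" "4 < n"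
  shows "regular_path xs"
proof -
  from allowed_path_walk_steps[OF assms] have d: "xs = walk n (hd xs) (steps n xs)" "set (steps n xs) \<subseteq> S124" "hd xs < n"
    by auto
  have "\<forall>s\<in>set (steps n xs). 0 < s \<and> s < n" using d(2) assms(4) by auto
  then show ?thesis using regular_walk[OF d(3)] d(1) by metis
qed

lemma steps_pos: "regular_path ys \<Longrightarrow> set ys \<subseteq> {..<n} \<Longrightarrow> \<forall>s\<in>set (steps n ys). 0 < s"
proof (induction n ys rule: steps.induct)
  case (1 n x y r)
  have xy: "x \<noteq> y" "x < n" "y < n" using 1(2,3) regular_path_Cons2 by auto
  have "(y + n - x) mod n \<noteq> 0"
  proof
    assume "(y + n - x) mod n = 0"
    then have "(x + (y + n - x) mod n) mod n = x mod n" by simp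
    then have "y = x" using mod_add_step[of x n y] xy by simp
    then show False using xy by simp
  qed
  moreover have "\<forall>s\<in>set (steps n (y#r)). 0 < s" using 1 regular_path_Cons2 by auto
  ultimately show ?case by auto
qed auto

lemma regular_path_walk_steps:
  assumes "ys \<noteq> []" "regular_path ys" "set ys \<subseteq> {..<n}" "0 < n"
  shows "ys = walk n (hd ys) (steps n ys) \<and> hd ys < n \<and> (\<forall>s\<in>set (steps n ys). 0 < s \<and> s < n)"
  using walk_steps[OF assms(1,3)] steps_pos[OF assms(2,3)] steps_less[OF assms(4)] assms(1,3)
  by (cases ys) auto

definition pred_mod :: "nat \<Rightarrow> nat \<Rightarrow> nat" where
  "pred_mod n v = (v + n - 1) mod n"

lemma pred_mod_less: "0 < n \<Longrightarrow> pred_mod n v < n" unfolding pred_mod_def by simp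

lemma int_pred_mod: "v < n \<Longrightarrow> int (pred_mod n v) = (int v - 1) mod int n"
  unfolding pred_mod_def using int_add_diff_mod[of v n 1] by simp

lemma steps_map_pred_mod: "set ys \<subseteq> {..<n} \<Longrightarrow> steps n (map (pred_mod n) ys) = steps n ys"
proof (induction n ys rule: steps.induct)
  case (1 n x y r)
  have xy: "x < n" "y < n" using 1(2) by auto
  have "int ((pred_mod n y + n - pred_mod n x) mod n) = (int (pred_mod n y) - int (pred_mod n x)) mod int n"
  proof -
    have n0: "0 < n" using xy by simp
    have "pred_mod n x \<le> n" using pred_mod_less[OF n0, of x] by simp
    then show ?thesis using int_add_diff_mod[OF pred_mod_less[OF n0]] by blast
  qed
  also have "\<dots> = ((int y - 1) mod int n - (int x - 1) mod int n) mod int n"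
    using int_pred_mod xy by simp
  also have "\<dots> = ((int y - 1) - (int x - 1)) mod int n" by (rule mod_diff_eq)
  also have "\<dots> = (int y - int x) mod int n" by simp
  also have "\<dots> = int ((y + n - x) mod n)" using int_add_diff_mod[of y n x] xy by simp
  finally have "(pred_mod n y + n - pred_mod n x) mod n = (y + n - x) mod n" by simp
  then show ?case using 1 by simp
qed auto

section \<open>The boundary in terms of inserted vertices\<close>

lemma finite_vpaths: "finite (vpaths n k)"
proof -
  have "vpaths n k = {xs. set xs \<subseteq> {..<n} \<and> length xs = k}" unfolding vpaths_def by auto
  then show ?thesis using finite_lists_length_eq[of "{..<n}" k] by simp
qed

lemma take_drop_delete_insert: "j < length xs \<Longrightarrow> take j xs @ drop (Suc j) xs = ys \<Longrightarrow> xs = take j ys @ (xs!j) # drop j ys"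
proof -
  assume a: "j < length xs" "take j xs @ drop (Suc j) xs = ys"
  have "take j ys = take j xs" using a by auto
  moreover have "drop j ys = drop (Suc j) xs" using a by auto
  ultimately show ?thesis using a(1) by (simp add: id_take_nth_drop[symmetric])
qed

lemma delete_fiber_eq_insertions:
  assumes "j \<le> length ys" "set ys \<subseteq> {..<n}"
  shows "{xs \<in> vpaths n (Suc (length ys)). take j xs @ drop (Suc j) xs = ys} = (\<lambda>w. take j ys @ w # drop j ys) ` {..<n}"
proof (intro equalityI subsetI)
  fix xs assume "xs \<in> {xs \<in> vpaths n (Suc (length ys)). take j xs @ drop (Suc j) xs = ys}"
  then have xs: "length xs = Suc (length ys)" "set xs \<subseteq> {..<n}" "take j xs @ drop (Suc j) xs = ys"
    unfolding vpaths_def by auto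
  have jl: "j < length xs" using xs(1) assms(1) by simp
  have "xs = take j ys @ (xs!j) # drop j ys" using take_drop_delete_insert[OF jl xs(3)] .
  moreover have "xs!j < n" using xs(2) jl nth_mem by blast
  ultimately show "xs \<in> (\<lambda>w. take j ys @ w # drop j ys) ` {..<n}" by blast
next
  fix xs assume "xs \<in> (\<lambda>w. take j ys @ w # drop j ys) ` {..<n}"
  then obtain w where w: "w < n" "xs = take j ys @ w # drop j ys" by auto
  have "set xs \<subseteq> {..<n}" using w assms(2) by (auto dest: in_set_takeD in_set_dropD)
  moreover have "length xs = Suc (length ys)" using w assms(1) by simp
  moreover have "take j xs @ drop (Suc j) xs = ys" using w assms(1) by simp
  ultimately show "xs \<in> {xs \<in> vpaths n (Suc (length ys)). take j xs @ drop (Suc j) xs = ys}"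
    unfolding vpaths_def by auto
qed

lemma inj_on_insert_at: "j \<le> length ys \<Longrightarrow> inj_on (\<lambda>w. take j ys @ w # drop j ys) A"
proof (rule inj_onI)
  fix w w' assume "j \<le> length ys" "take j ys @ w # drop j ys = take j ys @ w' # drop j ys"
  then show "w = w'" by simp
qed

lemma bd_eq_insertions:
  assumes "ys \<noteq> []" "regular_path ys" "set ys \<subseteq> {..<n}"
  shows "bd n u ys = (\<Sum>j\<le>length ys. (-1)^j * (\<Sum>w<n. u (take j ys @ w # drop j ys)))"
proof -
  let ?V = "vpaths n (Suc (length ys))"
  let ?f = "\<lambda>xs j. if take j xs @ drop (Suc j) xs = ys then (-1)^j * u xs else 0"
  have "bd n u ys = (\<Sum>xs\<in>?V. \<Sum>j<length xs. ?f xs j)"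
    using assms unfolding bd_def by simp
  also have "\<dots> = (\<Sum>xs\<in>?V. \<Sum>j<Suc (length ys). ?f xs j)"
    by (rule sum.cong) (auto simp: vpaths_def)
  also have "\<dots> = (\<Sum>j<Suc (length ys). \<Sum>xs\<in>?V. ?f xs j)"
    by (rule sum.swap)
  also have "\<dots> = (\<Sum>j\<le>length ys. (-1)^j * (\<Sum>w<n. u (take j ys @ w # drop j ys)))"
    unfolding lessThan_Suc_atMost
  proof (rule sum.cong[OF refl])
    fix j assume "j \<in> {..length ys}"
    hence j: "j \<le> length ys" by simp
    have "(\<Sum>xs\<in>?V. ?f xs j) = (\<Sum>xs\<in>{xs \<in> ?V. take j xs @ drop (Suc j) xs = ys}. (-1)^j * u xs)"
      by (simp add: sum.inter_filter[OF finite_vpaths])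
    also have "\<dots> = (\<Sum>xs\<in>(\<lambda>w. take j ys @ w # drop j ys) ` {..<n}. (-1)^j * u xs)"
      using delete_fiber_eq_insertions[OF j assms(3)] by simp
    also have "\<dots> = (\<Sum>w<n. (-1)^j * u (take j ys @ w # drop j ys))"
      by (subst sum.reindex[OF inj_on_insert_at[OF j]]) simp
    finally show "(\<Sum>xs\<in>?V. ?f xs j) = (-1)^j * (\<Sum>w<n. u (take j ys @ w # drop j ys))"
      by (simp add: sum_distrib_left)
  qed
  finally show ?thesis .
qed

lemma bd_chains:
  assumes "u \<in> chains n (Suc m)"
  shows "bd n u \<in> chains n m"
  unfolding chains_def
proof (intro CollectI allI impI)
  fix ys assume nz: "bd n u ys \<noteq> 0"
  then have ys: "ys \<noteq> []" "regular_path ys" "set ys \<subseteq> {..<n}" unfolding bd_def by (auto split: if_splits)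
  have "length ys = Suc m"
  proof (rule ccontr)
    assume ne: "length ys \<noteq> Suc m"
    have "\<forall>xs\<in>vpaths n (Suc (length ys)). u xs = 0"
      using assms ne unfolding chains_def vpaths_def by auto
    then have "bd n u ys = 0" unfolding bd_def by (auto intro!: sum.neutral)
    then show False using nz by simp
  qed
  then show "ys \<in> vpaths n (Suc m) \<and> regular_path ys" using ys unfolding vpaths_def by auto
qed

lemma bd_chains_0: "u \<in> chains n 0 \<Longrightarrow> bd n u = (\<lambda>_. 0)"
proof
  fix ys assume u: "u \<in> chains n 0"
  show "bd n u ys = 0"
  proof (cases "ys \<noteq> [] \<and> regular_path ys \<and> set ys \<subseteq> {..<n}")
    case True
    have "\<forall>xs\<in>vpaths n (Suc (length ys)). u xs = 0"
      using u True unfolding chains_def vpaths_def by auto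
    then show ?thesis unfolding bd_def by (auto intro!: sum.neutral)
  next
    case False then show ?thesis unfolding bd_def by auto
  qed
qed

definition allowed_supp :: "nat \<Rightarrow> ('k::field) chain \<Rightarrow> bool" where
  "allowed_supp n u \<longleftrightarrow> (\<forall>xs. u xs \<noteq> 0 \<longrightarrow> allowed_path n S124 xs \<and> set xs \<subseteq> {..<n})"

lemma Apaths_allowed_supp: "u \<in> Apaths n S124 m \<Longrightarrow> allowed_supp n u"
  unfolding Apaths_def chains_def vpaths_def allowed_supp_def by blast

lemma allowed_supp_walk_outside:
  assumes su: "allowed_supp n u" and n: "4 < n" and v: "v < n" and sl: "\<forall>s\<in>set \<sigma>. s < n"
    and x: "x \<in> set \<sigma>" "x \<notin> S124"
  shows "u (walk n v \<sigma>) = 0"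
proof (rule ccontr)
  assume "u (walk n v \<sigma>) \<noteq> 0"
  then have "allowed_path n S124 (walk n v \<sigma>)" using su unfolding allowed_supp_def by blast
  then have "set \<sigma> \<subseteq> S124" using allowed_walk_iff[OF v sl n] by simp
  then show False using x by auto
qed

lemma sum_reindex_support:
  assumes "finite A" "inj_on g A" "g ` A \<subseteq> B" "finite B" "\<And>w. w \<in> B \<Longrightarrow> F w \<noteq> 0 \<Longrightarrow> w \<in> g ` A"
  shows "sum F B = sum (F \<circ> g) A"
proof -
  have z: "\<forall>i\<in>B - g ` A. F i = 0" using assms(5) by blast
  have "sum F (g ` A) = sum F B"
    by (rule sum.mono_neutral_left[OF assms(4) assms(3) z])
  then have "sum F B = sum F (g ` A)" by simp
  also have "\<dots> = sum (F \<circ> g) A" using assms(2) by (rule sum.reindex)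
  finally show ?thesis .
qed

lemma sum_insert_front:
  assumes n: "4 < n" and su: "allowed_supp n u" and v: "v < n"
  shows "(\<Sum>w<n. u (w # walk n v \<tau>)) = (\<Sum>s\<in>S124. u (walk n ((v+n-s) mod n) (s#\<tau>)))"
proof -
  let ?g = "\<lambda>s. (v + n - s) mod n"
  have "(\<Sum>w<n. u (w # walk n v \<tau>)) = (\<Sum>s\<in>S124. u (?g s # walk n v \<tau>))"
  proof (subst sum_reindex_support[of S124 ?g "{..<n}"])
    show "inj_on ?g S124" using inj_on_sub_mod_S124[OF n] .
    show "?g ` S124 \<subseteq> {..<n}" using n by auto
    fix w assume w: "w \<in> {..<n}" "u (w # walk n v \<tau>) \<noteq> 0"
    then have "allowed_path n S124 (w # walk n v \<tau>)" using su unfolding allowed_supp_def by blast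
    moreover have "walk n v \<tau> = v # tl (walk n v \<tau>)" by (cases \<tau>) auto
    ultimately have "circ_arrow n S124 w v" using allowed_path_middle_arrow[of n S124 "[]" w v] by (metis append_Nil)
    then obtain s where s: "s \<in> S124" "v = (w+s) mod n" using circ_arrow_S124E by blast
    have "?g s = w" using s w n mod_add_sub_mod[of w n s] by auto
    then show "w \<in> ?g ` S124" using s by blast
  qed (auto simp: comp_def)
  also have "\<dots> = (\<Sum>s\<in>S124. u (walk n ((v+n-s) mod n) (s#\<tau>)))"
  proof (rule sum.cong[OF refl])
    fix s assume "s \<in> S124"
    then have "((v+n-s) mod n + s) mod n = v" using n v mod_sub_add_mod[of v n s] by auto
    then show "u (?g s # walk n v \<tau>) = u (walk n ((v+n-s) mod n) (s#\<tau>))" by simp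
  qed
  finally show ?thesis .
qed

lemma sum_insert_back:
  assumes n: "4 < n" and su: "allowed_supp n u" and v: "v < n"
  shows "(\<Sum>w<n. u (walk n v \<tau> @ [w])) = (\<Sum>s\<in>S124. u (walk n v (\<tau> @ [s])))"
proof -
  let ?e = "walk_end n v \<tau>"
  let ?g = "\<lambda>s. (?e + s) mod n"
  have pe: "walk n v \<tau> = butlast (walk n v \<tau>) @ [?e]"
    by (metis append_butlast_last_id last_walk walk_not_Nil)
  have "(\<Sum>w<n. u (walk n v \<tau> @ [w])) = (\<Sum>s\<in>S124. u (walk n v \<tau> @ [?g s]))"
  proof (subst sum_reindex_support[of S124 ?g "{..<n}"])
    show "inj_on ?g S124" using inj_on_add_mod_S124[OF n] .
    show "?g ` S124 \<subseteq> {..<n}" using n by auto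
    fix w assume w: "w \<in> {..<n}" "u (walk n v \<tau> @ [w]) \<noteq> 0"
    then have "allowed_path n S124 (walk n v \<tau> @ [w])" using su unfolding allowed_supp_def by blast
    then have "allowed_path n S124 (butlast (walk n v \<tau>) @ ?e # w # [])" using pe by (metis append.assoc append_Cons append_Nil)
    then have "circ_arrow n S124 ?e w" by (rule allowed_path_middle_arrow)
    then obtain s where s: "s \<in> S124" "w = (?e+s) mod n" using circ_arrow_S124E by blast
    then show "w \<in> ?g ` S124" by blast
  qed (auto simp: comp_def)
  also have "\<dots> = (\<Sum>s\<in>S124. u (walk n v (\<tau> @ [s])))"
    by (simp add: walk_snoc)
  finally show ?thesis .
qed

lemma walk_take_drop_Suc:
  assumes k: "k < length \<tau>"
  shows "take (Suc k) (walk n v \<tau>) = butlast (walk n v (take k \<tau>)) @ [walk_end n v (take k \<tau>)]"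
    and "drop (Suc k) (walk n v \<tau>) = walk n ((walk_end n v (take k \<tau>) + \<tau>!k) mod n) (drop (Suc k) \<tau>)"
  using k by (subst walk_split_nth[OF k]; simp)+

lemma walk_split_pair:
  assumes k: "k < length \<tau>" and st: "(s + t) mod n = \<tau>!k"
  shows "walk n v (take k \<tau> @ [s,t] @ drop (Suc k) \<tau>) =
    take (Suc k) (walk n v \<tau>) @ (walk_end n v (take k \<tau>) + s) mod n # drop (Suc k) (walk n v \<tau>)"
proof -
  let ?e = "walk_end n v (take k \<tau>)"
  have "((?e + s) mod n + t) mod n = (?e + \<tau>!k) mod n"
    using mod_add_mod_assoc[of ?e s n t] st by simp
  then show ?thesis unfolding walk_take_drop_Suc[OF k] by (simp add: walk_append)
qed

lemma sum_insert_inner: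
  assumes n: "4 < n" and su: "allowed_supp n u" and v: "v < n" and k: "k < length \<tau>" and d: "\<tau>!k < n"
  shows "(\<Sum>w<n. u (take (Suc k) (walk n v \<tau>) @ w # drop (Suc k) (walk n v \<tau>))) =
    (\<Sum>s\<in>S124. \<Sum>t\<in>S124. if (s+t) mod n = \<tau>!k then u (walk n v (take k \<tau> @ [s,t] @ drop (Suc k) \<tau>)) else 0)"
proof -
  let ?e = "walk_end n v (take k \<tau>)"
  let ?P = "walk n ((?e + \<tau>!k) mod n) (drop (Suc k) \<tau>)"
  let ?F = "\<lambda>w. u (take (Suc k) (walk n v \<tau>) @ w # drop (Suc k) (walk n v \<tau>))"
  let ?g = "\<lambda>s. (?e + s) mod n"
  have arrow: "circ_arrow n S124 ?e w \<and> circ_arrow n S124 w ((?e + \<tau>!k) mod n)" if "?F w \<noteq> 0" for w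
  proof -
    have "allowed_path n S124 (take (Suc k) (walk n v \<tau>) @ w # drop (Suc k) (walk n v \<tau>))"
      using that su unfolding allowed_supp_def by blast
    moreover have "?P = (?e + \<tau>!k) mod n # tl ?P" by (cases "drop (Suc k) \<tau>") auto
    ultimately show ?thesis unfolding walk_take_drop_Suc[OF k]
      by (metis allowed_path_middle_arrow append.assoc append_Cons append_Nil)
  qed
  have "(\<Sum>w<n. ?F w) = (\<Sum>s\<in>S124. ?F (?g s))"
  proof (subst sum_reindex_support[of S124 ?g "{..<n}"])
    show "inj_on ?g S124" using inj_on_add_mod_S124[OF n] .
    show "?g ` S124 \<subseteq> {..<n}" using n by auto
    fix w assume "?F w \<noteq> 0"
    then obtain s where "s \<in> S124" "w = (?e+s) mod n" using arrow circ_arrow_S124E by blast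
    then show "w \<in> ?g ` S124" by blast
  qed (auto simp: comp_def)
  also have "\<dots> = (\<Sum>s\<in>S124. \<Sum>t\<in>S124. if (s+t) mod n = \<tau>!k then u (walk n v (take k \<tau> @ [s,t] @ drop (Suc k) \<tau>)) else 0)"
  proof (rule sum.cong[OF refl])
    fix s assume s: "s \<in> S124"
    show "?F (?g s) = (\<Sum>t\<in>S124. if (s+t) mod n = \<tau>!k then u (walk n v (take k \<tau> @ [s,t] @ drop (Suc k) \<tau>)) else 0)"
    proof (cases "\<exists>t\<in>S124. (s+t) mod n = \<tau>!k")
      case True
      then obtain t where t: "t \<in> S124" "(s+t) mod n = \<tau>!k" by blast
      have "(s+t') mod n = \<tau>!k \<longleftrightarrow> t' = t" if "t' \<in> S124" for t'
        using that t n mod_add_left_inj_less[of t' n t s] by auto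
      then have "(\<Sum>t'\<in>S124. if (s+t') mod n = \<tau>!k then u (walk n v (take k \<tau> @ [s,t'] @ drop (Suc k) \<tau>)) else 0)
          = u (walk n v (take k \<tau> @ [s,t] @ drop (Suc k) \<tau>))"
        using t(1) by (simp add: if_distrib cong: if_cong)
      also have "\<dots> = ?F (?g s)" by (simp only: walk_split_pair[OF k t(2)])
      finally show ?thesis by simp
    next
      case False
      have "?F (?g s) = 0"
      proof (rule ccontr)
        assume "?F (?g s) \<noteq> 0"
        then obtain t where t: "t \<in> S124" "(?e + \<tau>!k) mod n = (?g s + t) mod n"
          using arrow circ_arrow_S124E by blast
        then have "(?e + \<tau>!k) mod n = (?e + (s+t) mod n) mod n" by (simp add: mod_add_mod_assoc)
        then have "\<tau>!k = (s+t) mod n" using d n mod_add_left_inj_less[of "\<tau>!k" n "(s+t) mod n" ?e] by simp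
        then show False using False t(1) by auto
      qed
      moreover have "(\<Sum>t\<in>S124. if (s+t) mod n = \<tau>!k then u (walk n v (take k \<tau> @ [s,t] @ drop (Suc k) \<tau>)) else 0) = 0"
        using False by (intro sum.neutral) auto
      ultimately show ?thesis by simp
    qed
  qed
  finally show ?thesis .
qed

text \<open>The face obtained by deleting an inner vertex of a walk merges two consecutive steps.\<close>

definition split_term :: "nat \<Rightarrow> ('k::field) chain \<Rightarrow> nat \<Rightarrow> nat list \<Rightarrow> nat \<Rightarrow> 'k" where
  "split_term n u v \<tau> k = (-1)^(Suc k) * (\<Sum>s\<in>S124. \<Sum>t\<in>S124. if (s+t) mod n = \<tau>!k then
     u (walk n v (take k \<tau> @ [s,t] @ drop (Suc k) \<tau>)) else 0)"

lemma bd_walk: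
  assumes n: "4 < n" and su: "allowed_supp n u" and v: "v < n" and tau: "\<forall>s\<in>set \<tau>. 0 < s \<and> s < n"
  shows "bd n u (walk n v \<tau>) = (\<Sum>s\<in>S124. u (walk n ((v+n-s) mod n) (s#\<tau>)))
   + (\<Sum>k<length \<tau>. split_term n u v \<tau> k) + (-1)^(Suc (length \<tau>)) * (\<Sum>s\<in>S124. u (walk n v (\<tau> @ [s])))"
proof -
  let ?ys = "walk n v \<tau>"
  let ?f = "\<lambda>j. (-1)^j * (\<Sum>w<n. u (take j ?ys @ w # drop j ?ys))"
  have "bd n u ?ys = (\<Sum>j\<le>length ?ys. ?f j)"
    by (rule bd_eq_insertions) (use regular_walk[OF v] tau set_walk[OF v] in auto)
  also have "\<dots> = ?f 0 + (\<Sum>k<length \<tau>. ?f (Suc k)) + ?f (Suc (length \<tau>))"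
    by (simp add: sum.atMost_shift)
  also have "?f 0 = (\<Sum>s\<in>S124. u (walk n ((v+n-s) mod n) (s#\<tau>)))"
    using sum_insert_front[OF n su v] by simp
  also have "(\<Sum>k<length \<tau>. ?f (Suc k)) = (\<Sum>k<length \<tau>. split_term n u v \<tau> k)"
  proof (rule sum.cong[OF refl])
    fix k assume "k \<in> {..<length \<tau>}"
    then have k: "k < length \<tau>" by simp
    then have "\<tau>!k < n" using tau nth_mem by blast
    then show "?f (Suc k) = split_term n u v \<tau> k"
      unfolding split_term_def using sum_insert_inner[OF n su v k] by simp
  qed
  also have "?f (Suc (length \<tau>)) = (-1)^(Suc (length \<tau>)) * (\<Sum>s\<in>S124. u (walk n v (\<tau> @ [s])))"
    using sum_insert_back[OF n su v] by simp
  finally show ?thesis .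
qed

section \<open>Sorting step words\<close>

definition sorted_steps :: "nat \<Rightarrow> nat \<Rightarrow> nat \<Rightarrow> nat list" where
  "sorted_steps a b e = replicate a 1 @ replicate b 2 @ replicate e 4"

fun inversions :: "nat list \<Rightarrow> nat" where
  "inversions [] = 0"
| "inversions (x#xs) = length (filter (\<lambda>y. y < x) xs) + inversions xs"

lemma inversions_swap: "t < s \<Longrightarrow> inversions (\<alpha> @ [s,t] @ \<beta>) = Suc (inversions (\<alpha> @ [t,s] @ \<beta>))"
  by (induction \<alpha>) auto

lemma sign_inversions_swap: "s \<noteq> t \<Longrightarrow> (-1::'k::field)^inversions (\<alpha> @ [s,t] @ \<beta>) = - ((-1)^inversions (\<alpha> @ [t,s] @ \<beta>))"
proof (cases "t < s")
  case True then show ?thesis using inversions_swap[of t s \<alpha> \<beta>] by simp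
next
  case False
  assume "s \<noteq> t"
  hence "s < t" using False by simp
  then show ?thesis using inversions_swap[of s t \<alpha> \<beta>] by simp
qed

lemma inversions_append: "inversions (xs @ ys) = inversions xs + inversions ys + sum_list (map (\<lambda>x. length (filter (\<lambda>y. y < x) ys)) xs)"
  by (induction xs) auto

lemma length_filter_replicate: "length (filter P (replicate k x)) = (if P x then k else 0)"
  by (induction k) auto

lemma inversions_replicate[simp]: "inversions (replicate k x) = 0"
  by (induction k) (auto simp: length_filter_replicate)

lemma count_list_replicate[simp]: "count_list (replicate k x) y = (if x = y then k else 0)"
  by (induction k) auto

lemma replicate_append_pair: "replicate k x @ [x,x] = x # x # replicate k x"
  by (induction k) auto

lemma length_sorted_steps[simp]: "length (sorted_steps a b e) = a + b + e"
  by (simp add: sorted_steps_def)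

lemma count_sorted_steps[simp]:
  "count_list (sorted_steps a b e) x = (if x = 1 then a else if x = 2 then b else if x = 4 then e else 0)"
  by (simp add: sorted_steps_def)

lemma set_sorted_steps: "set (sorted_steps a b e) \<subseteq> S124"
  by (auto simp: sorted_steps_def)

lemma count_list_S124_sum: "set \<sigma> \<subseteq> S124 \<Longrightarrow> count_list \<sigma> 1 + count_list \<sigma> 2 + count_list \<sigma> 4 = length \<sigma>"
  by (induction \<sigma>) auto

lemma inversions_0_Cons_le: "inversions (y#ys) = 0 \<Longrightarrow> z \<in> set ys \<Longrightarrow> y \<le> z"
  by (auto simp: filter_empty_conv)

lemma inversions_0_sorted_steps:
  "set \<sigma> \<subseteq> S124 \<Longrightarrow> inversions \<sigma> = 0 \<Longrightarrow> \<sigma> = sorted_steps (count_list \<sigma> 1) (count_list \<sigma> 2) (count_list \<sigma> 4)"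
proof (induction \<sigma>)
  case Nil then show ?case by (simp add: sorted_steps_def)
next
  case (Cons x xs)
  have ih: "xs = sorted_steps (count_list xs 1) (count_list xs 2) (count_list xs 4)"
    using Cons by simp
  have ge: "\<forall>z\<in>set xs. x \<le> z" using Cons.prems(2) by (auto simp: filter_empty_conv)
  consider "x = 1" | "x = 2" | "x = 4" using Cons.prems(1) by auto
  then show ?case
  proof cases
    case 1 then show ?thesis using ih by (simp add: sorted_steps_def)
  next
    case 2
    hence "count_list xs 1 = 0" using ge by (auto simp: count_list_0_iff)
    then show ?thesis using ih 2 by (simp add: sorted_steps_def)
  next
    case 3
    hence "count_list xs 1 = 0" "count_list xs 2 = 0" using ge by (auto simp: count_list_0_iff)
    then show ?thesis using ih 3 by (simp add: sorted_steps_def)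
  qed
qed

lemma inversions_pos_descent: "inversions \<sigma> > 0 \<Longrightarrow> \<exists>\<alpha> \<beta> s t. \<sigma> = \<alpha> @ [s,t] @ \<beta> \<and> t < s"
proof (induction \<sigma>)
  case Nil then show ?case by simp
next
  case (Cons x xs)
  show ?case
  proof (cases "inversions xs > 0")
    case True
    then obtain \<alpha> \<beta> s t where "xs = \<alpha> @ [s,t] @ \<beta>" "t < s" using Cons.IH by blast
    then show ?thesis by (metis append_Cons)
  next
    case False
    hence i0: "inversions xs = 0" by simp
    then have "filter (\<lambda>y. y < x) xs \<noteq> []" using Cons.prems by simp
    then obtain z where z: "z \<in> set xs" "z < x" by (auto simp: filter_empty_conv)
    then obtain y ys where xs: "xs = y # ys" by (cases xs) auto
    have "y \<le> z" using z xs inversions_0_Cons_le[of y ys z] i0 by auto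
    hence "y < x" using z by simp
    then show ?thesis using xs
      by (intro exI[of _ "[]"] exI[of _ ys] exI[of _ x] exI[of _ y]) simp
  qed
qed

lemma alternating_sort_sign:
  fixes f :: "nat list \<Rightarrow> 'k::field"
  assumes swap: "\<And>\<alpha> \<beta> s t. s\<in>S124 \<Longrightarrow> t\<in>S124 \<Longrightarrow> s\<noteq>t \<Longrightarrow> set \<alpha> \<subseteq> S124 \<Longrightarrow> set \<beta> \<subseteq> S124 \<Longrightarrow>
        length \<alpha> + length \<beta> + 2 = L \<Longrightarrow> f (\<alpha>@[s,t]@\<beta>) = - f (\<alpha>@[t,s]@\<beta>)"
  shows "set \<sigma> \<subseteq> S124 \<Longrightarrow> length \<sigma> = L \<Longrightarrow>
     f \<sigma> = (-1)^inversions \<sigma> * f (sorted_steps (count_list \<sigma> 1) (count_list \<sigma> 2) (count_list \<sigma> 4))"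
proof (induction "inversions \<sigma>" arbitrary: \<sigma> rule: less_induct)
  case less
  show ?case
  proof (cases "inversions \<sigma> = 0")
    case True
    then show ?thesis using inversions_0_sorted_steps[OF less.prems(1)] by simp
  next
    case False
    then obtain \<alpha> \<beta> s t where sg: "\<sigma> = \<alpha> @ [s,t] @ \<beta>" "t < s" using inversions_pos_descent by blast
    define \<sigma>' where "\<sigma>' = \<alpha> @ [t,s] @ \<beta>"
    have n': "inversions \<sigma> = Suc (inversions \<sigma>')" using inversions_swap[OF sg(2)] sg unfolding \<sigma>'_def by simp
    have set': "set \<sigma>' \<subseteq> S124" "length \<sigma>' = L" using less.prems sg unfolding \<sigma>'_def by auto
    have cnt: "count_list \<sigma>' x = count_list \<sigma> x" for x using sg unfolding \<sigma>'_def by simp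
    have "f \<sigma> = - f \<sigma>'"
      using swap[of s t \<alpha> \<beta>] less.prems sg unfolding \<sigma>'_def by auto
    also have "f \<sigma>' = (-1)^inversions \<sigma>' * f (sorted_steps (count_list \<sigma> 1) (count_list \<sigma> 2) (count_list \<sigma> 4))"
      using less.hyps[of \<sigma>'] n' set' cnt by simp
    finally show ?thesis using n' by simp
  qed
qed

lemma sorted_steps_44: "e \<ge> 2 \<Longrightarrow> sorted_steps a b e = (replicate a 1 @ replicate b 2 @ replicate (e-2) 4) @ [4,4] @ []"
proof -
  assume "e \<ge> 2"
  then obtain k where "e = k + 2" by (metis add.commute le_Suc_ex)
  then show ?thesis by (simp add: sorted_steps_def replicate_append_pair)
qed

lemma inversions_sorted_steps: "inversions (sorted_steps a b e) = 0"
  by (simp add: sorted_steps_def inversions_append length_filter_replicate sum_list_replicate)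

lemma inversions_Cons_sorted_steps:
  "inversions (1 # sorted_steps a b e) = 0" "inversions (Suc 0 # sorted_steps a b e) = 0"
  "inversions (2 # sorted_steps a b e) = a" "inversions (4 # sorted_steps a b e) = a + b"
  by (simp_all add: sorted_steps_def inversions_append length_filter_replicate inversions_sorted_steps sum_list_replicate)

lemma inversions_sorted_steps_snoc:
  "inversions (sorted_steps a b e @ [1]) = b + e" "inversions (sorted_steps a b e @ [Suc 0]) = b + e"
  "inversions (sorted_steps a b e @ [2]) = e" "inversions (sorted_steps a b e @ [4]) = 0"
  by (simp_all add: sorted_steps_def inversions_append length_filter_replicate sum_list_replicate)

lemma inversions_merge_11: "inversions (replicate a 1 @ replicate i 2 @ [1,1] @ replicate j 2 @ replicate e 4) = 2 * i"
  by (simp add: inversions_append length_filter_replicate sum_list_replicate)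

lemma nth_sorted_steps_1: "k < a \<Longrightarrow> sorted_steps a b e ! k = 1"
  by (simp add: sorted_steps_def nth_append)

lemma sorted_steps_split_2: "i < b \<Longrightarrow> sorted_steps a b e ! (a+i) = 2 \<and> take (a+i) (sorted_steps a b e) = replicate a 1 @ replicate i 2
   \<and> drop (Suc (a+i)) (sorted_steps a b e) = replicate (b - Suc i) 2 @ replicate e 4"
  by (simp add: sorted_steps_def nth_append)

lemma sorted_steps_split_4: "sorted_steps a b 1 ! (a+b) = 4 \<and> take (a+b) (sorted_steps a b 1) = replicate a 1 @ replicate b 2
   \<and> drop (Suc (a+b)) (sorted_steps a b 1) = []"
  by (simp add: sorted_steps_def nth_append)

section \<open>Chains given by coefficient functions\<close>

text \<open>\<open>c v a b e\<close> is the coefficient of the walk from \<open>v\<close> along the sorted word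
  \<open>1\<^sup>a 2\<^sup>b 4\<^sup>e\<close>; only its values on cells (\<open>e \<le> 1\<close>) matter.\<close>

type_synonym 'k coef = "int \<Rightarrow> nat \<Rightarrow> nat \<Rightarrow> nat \<Rightarrow> 'k"

definition periodic :: "nat \<Rightarrow> ('k::field) coef \<Rightarrow> bool" where
  "periodic n c \<longleftrightarrow> (\<forall>v. c v = c (v mod int n))"

definition cell :: "nat \<Rightarrow> nat \<Rightarrow> nat \<Rightarrow> nat \<Rightarrow> bool" where
  "cell m a b e \<longleftrightarrow> a + b + e = m \<and> e \<le> 1"

definition chain_of_coef :: "nat \<Rightarrow> nat \<Rightarrow> ('k::field) coef \<Rightarrow> 'k chain" where
  "chain_of_coef n m c xs = (if xs \<noteq> [] \<and> set xs \<subseteq> {..<n} \<and> length xs = Suc m \<and> allowed_path n S124 xs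
      \<and> count_list (steps n xs) 4 \<le> 1
    then (-1)^inversions (steps n xs) * c (int (hd xs)) (count_list (steps n xs) 1) (count_list (steps n xs) 2)
       (count_list (steps n xs) 4) else 0)"

definition coef_of_chain :: "nat \<Rightarrow> ('k::field) chain \<Rightarrow> 'k coef" where
  "coef_of_chain n u v a b e = u (walk n (nat (v mod int n)) (sorted_steps a b e))"

lemma periodic_nat_mod: "periodic n c \<Longrightarrow> w = nat (v mod int n) \<Longrightarrow> 0 < n \<Longrightarrow> c (int w) = c v"
  unfolding periodic_def by (metis int_nat_eq mod_int_pos_iff of_nat_0_less_iff order_less_imp_le)

lemma periodic_diff_mod: "periodic n w \<Longrightarrow> w (v mod int n - k) = w (v - k)"
  by (metis periodic_def mod_diff_left_eq)

lemma periodic_shift1: "periodic n c \<Longrightarrow> periodic n (\<lambda>v. c (v - 1))"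
  unfolding periodic_def by (metis mod_diff_left_eq)

lemma periodic_smult: "periodic n c \<Longrightarrow> periodic n (\<lambda>v a b e. k * c v a b e)"
  unfolding periodic_def by metis

lemma periodic_diff: "periodic n c \<Longrightarrow> periodic n d \<Longrightarrow> periodic n (\<lambda>v a b e. c v a b e - d v a b e)"
  unfolding periodic_def by metis

lemma periodic_sub_mod:
  assumes p: "periodic n c" and w: "w = nat (v mod int n)" and r: "r \<le> n" and n: "0 < n"
  shows "c (int ((w + n - r) mod n)) = c (v - int r)"
proof -
  have "int ((w + n - r) mod n) = (int w + int n - int r) mod int n"
    using r by (simp add: zmod_int of_nat_diff)
  also have "int w = v mod int n" using w n by simp
  also have "(v mod int n + int n - int r) mod int n = (v - int r) mod int n"
  proof -
    have "(v mod int n + int n - int r) mod int n = (v mod int n + (int n - int r)) mod int n" by (simp add: algebra_simps)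
    also have "\<dots> = (v + (int n - int r)) mod int n" by (rule mod_add_left_eq)
    also have "\<dots> = (v - int r) mod int n"
    proof -
      have e: "v + (int n - int r) = (v - int r) + int n" by simp
      show ?thesis unfolding e by (rule mod_add_self2)
    qed
    finally show ?thesis .
  qed
  finally have "int ((w + n - r) mod n) = (v - int r) mod int n" .
  then show ?thesis using p unfolding periodic_def by metis
qed

lemma chain_of_coef_walk:
  assumes n: "4 < n" and v: "v < n" and sl: "\<forall>s\<in>set \<sigma>. s < n"
  shows "chain_of_coef n m c (walk n v \<sigma>) = (if length \<sigma> = m \<and> set \<sigma> \<subseteq> S124 \<and> count_list \<sigma> 4 \<le> 1
     then (-1)^inversions \<sigma> * c (int v) (count_list \<sigma> 1) (count_list \<sigma> 2) (count_list \<sigma> 4) else 0)"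
proof -
  have st: "steps n (walk n v \<sigma>) = \<sigma>" using steps_walk[OF v sl] .
  have al: "allowed_path n S124 (walk n v \<sigma>) \<longleftrightarrow> set \<sigma> \<subseteq> S124" using allowed_walk_iff[OF v sl n] .
  show ?thesis unfolding chain_of_coef_def st al using set_walk[OF v, of \<sigma>] by auto
qed

lemma allowed_supp_chain_of_coef: "allowed_supp n (chain_of_coef n m c)"
  unfolding allowed_supp_def chain_of_coef_def by (auto split: if_splits)

lemma chain_of_coef_Apaths: "4 < n \<Longrightarrow> chain_of_coef n m c \<in> Apaths n S124 m"
  unfolding Apaths_def chains_def vpaths_def
  using allowed_path_regular[of _ n] by (auto simp: chain_of_coef_def split: if_splits)

lemma chain_of_coef_swap:
  assumes n: "4 < n" and v: "v < n" and sl: "\<forall>x\<in>set \<alpha> \<union> set \<beta>. x < n" and st: "s < n" "t < n" "s \<noteq> t"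
  shows "chain_of_coef n m c (walk n v (\<alpha>@[s,t]@\<beta>)) = - chain_of_coef n m c (walk n v (\<alpha>@[t,s]@\<beta>))"
proof -
  have s1: "\<forall>x\<in>set (\<alpha>@[s,t]@\<beta>). x < n" "\<forall>x\<in>set (\<alpha>@[t,s]@\<beta>). x < n" using sl st by auto
  show ?thesis unfolding chain_of_coef_walk[OF n v s1(1)] chain_of_coef_walk[OF n v s1(2)]
    using sign_inversions_swap[OF st(3), of \<alpha> \<beta>] by auto
qed

lemma chain_of_coef_44:
  assumes n: "4 < n" and v: "v < n" and sl: "\<forall>x\<in>set \<alpha> \<union> set \<beta>. x < n"
  shows "chain_of_coef n m c (walk n v (\<alpha>@[4,4]@\<beta>)) = 0"
proof -
  have s1: "\<forall>x\<in>set (\<alpha>@[4,4]@\<beta>). x < n" using sl n by auto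
  show ?thesis unfolding chain_of_coef_walk[OF n v s1] by simp
qed

lemma chain_of_coef_move_pair:
  assumes n: "4 < n" and v: "v < n" and sl: "\<forall>x\<in>set \<alpha> \<union> set \<beta>. x < n" and st: "p < n" "t < n"
  shows "chain_of_coef n m c (walk n v (\<alpha>@[p,p,t]@\<beta>)) = chain_of_coef n m c (walk n v (\<alpha>@[t,p,p]@\<beta>))"
proof (cases "p = t")
  case True then show ?thesis by simp
next
  case False
  have "chain_of_coef n m c (walk n v ((\<alpha>@[p])@[p,t]@\<beta>)) = - chain_of_coef n m c (walk n v ((\<alpha>@[p])@[t,p]@\<beta>))"
    using chain_of_coef_swap[OF n v _ st(1,2) False, of "\<alpha>@[p]" \<beta>] sl st by auto
  also have "(\<alpha>@[p])@[t,p]@\<beta> = \<alpha>@[p,t]@([p]@\<beta>)" by simp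
  also have "chain_of_coef n m c (walk n v (\<alpha>@[p,t]@([p]@\<beta>))) = - chain_of_coef n m c (walk n v (\<alpha>@[t,p]@([p]@\<beta>)))"
    using chain_of_coef_swap[OF n v _ st(1,2) False, of \<alpha> "[p]@\<beta>"] sl st by auto
  finally show ?thesis by simp
qed

lemma chain_of_coef_two_fours:
  assumes n: "4 < n" and v: "v < n" and sl: "\<forall>s\<in>set \<sigma>. s < n" and c4: "2 \<le> count_list \<sigma> 4"
  shows "chain_of_coef n m c (walk n v \<sigma>) = 0"
  unfolding chain_of_coef_walk[OF n v sl] using c4 by simp

lemma chain_of_coef_cong:
  assumes n: "4 < n" and eq: "\<And>v a b e. cell m a b e \<Longrightarrow> c v a b e = c' v a b e"
  shows "chain_of_coef n m c = chain_of_coef n m c'"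
proof
  fix xs
  show "chain_of_coef n m c xs = chain_of_coef n m c' xs"
  proof (cases "xs \<noteq> [] \<and> set xs \<subseteq> {..<n} \<and> length xs = Suc m \<and> allowed_path n S124 xs \<and> count_list (steps n xs) 4 \<le> 1")
    case True
    then have s: "set (steps n xs) \<subseteq> S124" using allowed_path_walk_steps[of xs n] n by auto
    have l: "length (steps n xs) = m" using True by (simp add: length_steps)
    have "cell m (count_list (steps n xs) 1) (count_list (steps n xs) 2) (count_list (steps n xs) 4)"
      unfolding cell_def using count_list_S124_sum[OF s] l True by simp
    then show ?thesis using eq unfolding chain_of_coef_def if_P[OF True] by simp
  next
    case False then show ?thesis unfolding chain_of_coef_def if_not_P[OF False] by simp
  qed
qed

lemma coef_of_chain_of_coef:
  assumes n: "10 < n" and p: "periodic n c" and cl: "cell m a b e"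
  shows "coef_of_chain n (chain_of_coef n m c) v a b e = c v a b e"
proof -
  have n4: "4 < n" and n0: "0 < n" using n by auto
  define w where "w = nat (v mod int n)"
  have w: "w < n" unfolding w_def using n0
    by (metis nat_less_iff of_nat_0_less_iff pos_mod_bound pos_mod_sign)
  have cw: "c (int w) = c v" by (rule periodic_nat_mod[OF p w_def n0])
  have sl: "\<forall>s\<in>set (sorted_steps a b e). s < n" using set_sorted_steps[of a b e] n by auto
  show ?thesis unfolding coef_of_chain_def w_def[symmetric] chain_of_coef_walk[OF n4 w sl]
    using cl set_sorted_steps[of a b e] cw unfolding cell_def by (simp add: inversions_sorted_steps)
qed

lemma periodic_coef_of_chain: "periodic n (coef_of_chain n u)"
  unfolding periodic_def coef_of_chain_def by simp

definition agree_on_cells :: "nat \<Rightarrow> ('k::field) coef \<Rightarrow> 'k coef \<Rightarrow> bool" where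
  "agree_on_cells m c d \<longleftrightarrow> (\<forall>v a b e. cell m a b e \<longrightarrow> c v a b e = d v a b e)"

lemma chain_of_coef_eq_iff:
  assumes n: "10 < n" and p: "periodic n c" "periodic n c'"
  shows "chain_of_coef n m c = chain_of_coef n m c' \<longleftrightarrow> agree_on_cells m c c'"
  unfolding agree_on_cells_def
proof
  assume "chain_of_coef n m c = chain_of_coef n m c'"
  then show "\<forall>v a b e. cell m a b e \<longrightarrow> c v a b e = c' v a b e"
    using coef_of_chain_of_coef[OF n p(1)] coef_of_chain_of_coef[OF n p(2)] by metis
next
  assume "\<forall>v a b e. cell m a b e \<longrightarrow> c v a b e = c' v a b e"
  then show "chain_of_coef n m c = chain_of_coef n m c'" using n by (intro chain_of_coef_cong) auto
qed

lemma chain_of_coef_diff_smult: "chain_of_coef n m (\<lambda>v a b e. c v a b e - k * d v a b e) = (\<lambda>xs. chain_of_coef n m c xs - k * chain_of_coef n m d xs)"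
  by (rule ext) (simp add: chain_of_coef_def algebra_simps)

lemma chain_of_coef_smult: "chain_of_coef n m (\<lambda>v a b e. k * c v a b e) = (\<lambda>xs. k * chain_of_coef n m c xs)"
  by (rule ext) (simp add: chain_of_coef_def algebra_simps)

lemma chain_of_coef_zero: "chain_of_coef n m (\<lambda>v a b e. 0) = (\<lambda>xs. 0)"
  by (rule ext) (simp add: chain_of_coef_def)

lemma sum_S124: "(\<Sum>r\<in>S124. f r) = f 1 + f 2 + (f 4 :: 'k::field)"
  by (simp add: algebra_simps)

lemma sum_S124_S124: "(\<Sum>s\<in>S124. \<Sum>t\<in>S124. G s t) = G 1 1 + G 1 2 + G 1 4 + G 2 1 + G 2 2 + G 2 4 + G 4 1 + G 4 2 + (G 4 4::'k::field)"
  by (simp add: algebra_simps)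

lemma split_sum_S124:
  fixes G :: "nat \<Rightarrow> nat \<Rightarrow> 'k::field"
  assumes "x \<in> S124" "8 < n"
  shows "(\<Sum>p\<in>S124. \<Sum>q\<in>S124. if (p+q) mod n = x then G p q else 0) = (if x = 2 then G 1 1 else if x = 4 then G 2 2 else 0)"
proof -
  have m: "(1+1) mod n = 2" "(1+2) mod n = 3" "(1+4) mod n = 5" "(2+1) mod n = 3" "(2+2) mod n = 4"
    "(2+4) mod n = 6" "(4+1) mod n = 5" "(4+2) mod n = 6" "(4+4) mod n = (8::nat)"
    using assms(2) by simp_all
  show ?thesis unfolding sum_S124_S124 m using assms(1) by auto
qed

lemma split_sum_cancel:
  fixes F :: "nat \<Rightarrow> nat \<Rightarrow> 'k::field"
  assumes "F 1 2 = - F 2 1" "F 1 4 = - F 4 1" "F 2 4 = - F 4 2" "F 4 4 = 0" "d \<noteq> 2" "d \<noteq> 4" "8 < n"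
  shows "(\<Sum>s\<in>S124. \<Sum>t\<in>S124. if (s+t) mod n = d then F s t else 0) = 0"
proof -
  have m: "(1+1) mod n = 2" "(1+2) mod n = 3" "(1+4) mod n = 5" "(2+1) mod n = 3" "(2+2) mod n = 4"
    "(2+4) mod n = 6" "(4+1) mod n = 5" "(4+2) mod n = 6" "(4+4) mod n = (8::nat)"
    using assms(7) by simp_all
  show ?thesis unfolding sum_S124_S124 m using assms(1-6) by auto
qed

lemma split_sum_pair:
  fixes F :: "nat \<Rightarrow> nat \<Rightarrow> 'k::field"
  assumes "s \<in> S124" "t \<in> S124" "s \<noteq> t" "8 < n"
  shows "(\<Sum>s'\<in>S124. \<Sum>t'\<in>S124. if (s'+t') mod n = s + t then F s' t' else 0) = F s t + F t s"
proof -
  have m: "(1+1) mod n = 2" "(1+2) mod n = 3" "(1+4) mod n = 5" "(2+1) mod n = 3" "(2+2) mod n = 4"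
    "(2+4) mod n = 6" "(4+1) mod n = 5" "(4+2) mod n = 6" "(4+4) mod n = (8::nat)"
    using assms(4) by simp_all
  show ?thesis unfolding sum_S124_S124 m using assms(1-3) by (auto simp: algebra_simps)
qed

lemma split_sum_8:
  fixes F :: "nat \<Rightarrow> nat \<Rightarrow> 'k::field"
  assumes "8 < n"
  shows "(\<Sum>s'\<in>S124. \<Sum>t'\<in>S124. if (s'+t') mod n = 8 then F s' t' else 0) = F 4 4"
proof -
  have m: "(1+1) mod n = 2" "(1+2) mod n = 3" "(1+4) mod n = 5" "(2+1) mod n = 3" "(2+2) mod n = 4"
    "(2+4) mod n = 6" "(4+1) mod n = 5" "(4+2) mod n = 6" "(4+4) mod n = (8::nat)"
    using assms(1) by simp_all
  show ?thesis unfolding sum_S124_S124 m by simp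
qed

lemma nth_in_set_split:
  assumes "j < length \<tau>" "k < length \<tau>" "k \<noteq> j"
  shows "\<tau>!j \<in> set (take k \<tau> @ [s,t] @ drop (Suc k) \<tau>)"
proof (cases "j < k")
  case True
  then have "\<tau>!j = take k \<tau> ! j" by simp
  moreover have "j < length (take k \<tau>)" using True assms by simp
  ultimately show ?thesis by (metis Un_iff nth_mem set_append)
next
  case False
  then have jk: "k < j" using assms by simp
  then have "\<tau>!j = drop (Suc k) \<tau> ! (j - Suc k)" using assms by simp
  moreover have "j - Suc k < length (drop (Suc k) \<tau>)" using jk assms by simp
  ultimately show ?thesis by (metis Un_iff nth_mem set_append)
qed

lemma sum_lessThan_single:
  assumes "j < (N::nat)" "\<And>k. k < N \<Longrightarrow> k \<noteq> j \<Longrightarrow> g k = 0"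
  shows "(\<Sum>k<N. g k) = (g j :: 'k::field)"
proof -
  have "(\<Sum>k<N. g k) = g j + (\<Sum>k\<in>{..<N} - {j}. g k)"
    using assms(1) by (intro sum.remove) auto
  also have "(\<Sum>k\<in>{..<N} - {j}. g k) = 0" using assms(2) by (intro sum.neutral) auto
  finally show ?thesis by simp
qed

lemma bd_walk_non_step:
  assumes n: "10 < n" and su: "allowed_supp n u" and v: "v < n" and ab: "set \<alpha> \<subseteq> S124" "set \<beta> \<subseteq> S124"
    and d: "d \<notin> S124" "0 < d" "d < n"
  shows "bd n u (walk n v (\<alpha>@[d]@\<beta>)) = (-1)^(Suc (length \<alpha>)) *
     (\<Sum>s\<in>S124. \<Sum>t\<in>S124. if (s+t) mod n = d then u (walk n v (\<alpha>@[s,t]@\<beta>)) else 0)"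
proof -
  define \<tau> where "\<tau> = \<alpha>@[d]@\<beta>"
  have n4: "4 < n" using n by simp
  have tau: "\<forall>s\<in>set \<tau>. 0 < s \<and> s < n" using ab d n unfolding \<tau>_def by auto
  have tl: "\<forall>s\<in>set \<tau>. s < n" using tau by auto
  have dj: "\<tau>!length \<alpha> = d" "length \<alpha> < length \<tau>" unfolding \<tau>_def by auto
  have dset: "d \<in> set \<tau>" unfolding \<tau>_def by simp
  have A: "(\<Sum>s\<in>S124. u (walk n ((v+n-s) mod n) (s#\<tau>))) = 0"
  proof (rule sum.neutral, rule ballI)
    fix s assume s: "s \<in> S124"
    show "u (walk n ((v+n-s) mod n) (s#\<tau>)) = 0"
      by (rule allowed_supp_walk_outside[OF su n4 _ _ _ d(1)]) (use n4 s tl dset in auto)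
  qed
  have C: "(\<Sum>s\<in>S124. u (walk n v (\<tau> @ [s]))) = 0"
  proof (rule sum.neutral, rule ballI)
    fix s assume s: "s \<in> S124"
    show "u (walk n v (\<tau> @ [s])) = 0"
      by (rule allowed_supp_walk_outside[OF su n4 v _ _ d(1)]) (use n4 s tl dset in auto)
  qed
  let ?g = "split_term n u v \<tau>"
  have B: "(\<Sum>k<length \<tau>. ?g k) = ?g (length \<alpha>)"
  proof (rule sum_lessThan_single[OF dj(2)])
    fix k assume k: "k < length \<tau>" "k \<noteq> length \<alpha>"
    have "(\<Sum>s\<in>S124. \<Sum>t\<in>S124. if (s+t) mod n = \<tau>!k then u (walk n v (take k \<tau> @ [s,t] @ drop (Suc k) \<tau>)) else 0) = 0"
    proof (rule sum.neutral, rule ballI, rule sum.neutral, rule ballI)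
      fix s t assume st: "s \<in> S124" "t \<in> S124"
      have "u (walk n v (take k \<tau> @ [s,t] @ drop (Suc k) \<tau>)) = 0"
        by (rule allowed_supp_walk_outside[OF su n4 v _ _ d(1)])
           (use tl st n4 nth_in_set_split[OF dj(2) k(1) k(2)] dj(1) in \<open>auto dest: in_set_takeD in_set_dropD\<close>)
      then show "(if (s+t) mod n = \<tau>!k then u (walk n v (take k \<tau> @ [s,t] @ drop (Suc k) \<tau>)) else 0) = 0" by simp
    qed
    then show "?g k = 0" by (simp add: split_term_def)
  qed
  have "take (length \<alpha>) \<tau> = \<alpha>" "drop (Suc (length \<alpha>)) \<tau> = \<beta>" unfolding \<tau>_def by auto
  then have "?g (length \<alpha>) = (-1)^(Suc (length \<alpha>)) *
     (\<Sum>s\<in>S124. \<Sum>t\<in>S124. if (s+t) mod n = d then u (walk n v (\<alpha>@[s,t]@\<beta>)) else 0)"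
    using dj(1) by (simp add: split_term_def)
  then show ?thesis
    using bd_walk[OF n4 su v tau] A B C unfolding \<tau>_def by simp
qed

lemma split_term_chain_of_coef_non_step:
  assumes n: "10 < n" and v: "v < n" and tl: "\<forall>s\<in>set \<tau>. s < n"
    and j: "j < length \<tau>" "\<tau>!j \<notin> S124" and k: "k < length \<tau>"
  shows "split_term n (chain_of_coef n m c) v \<tau> k = 0"
proof -
  have n4: "4 < n" using n by simp
  let ?u = "chain_of_coef n m c"
  let ?F = "\<lambda>s t. ?u (walk n v (take k \<tau> @ [s,t] @ drop (Suc k) \<tau>))"
  have sl: "\<forall>x\<in>set (take k \<tau>) \<union> set (drop (Suc k) \<tau>). x < n"
    using tl by (auto dest: in_set_takeD in_set_dropD)
  have "(\<Sum>s\<in>S124. \<Sum>t\<in>S124. if (s+t) mod n = \<tau>!k then ?F s t else 0) = 0"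
  proof (cases "\<tau>!k \<in> S124")
    case False
    have f: "?F 1 2 = - ?F 2 1" "?F 1 4 = - ?F 4 1" "?F 2 4 = - ?F 4 2" "?F 4 4 = 0"
      using chain_of_coef_swap[OF n4 v sl, of 1 2] chain_of_coef_swap[OF n4 v sl, of 1 4]
        chain_of_coef_swap[OF n4 v sl, of 2 4] chain_of_coef_44[OF n4 v sl] n by auto
    show ?thesis
      by (rule split_sum_cancel[OF f]) (use False n in auto)
  next
    case True
    then have kj: "k \<noteq> j" using j by auto
    have "?F s t = 0" if "s \<in> S124" "t \<in> S124" for s t
      by (rule allowed_supp_walk_outside[OF allowed_supp_chain_of_coef n4 v _ nth_in_set_split[OF j(1) k kj] j(2)])
        (use tl that n4 in \<open>auto dest: in_set_takeD in_set_dropD\<close>)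
    then show ?thesis by (intro sum.neutral ballI) simp
  qed
  then show ?thesis by (simp add: split_term_def)
qed

text \<open>Faces containing a non-step either cancel in pairs or have a non-allowed neighbour.\<close>

lemma bd_chain_of_coef_allowed:
  assumes n: "10 < n" and nz: "bd n (chain_of_coef n m c) ys \<noteq> 0"
  shows "allowed_path n S124 ys"
proof (rule ccontr)
  assume na: "\<not> allowed_path n S124 ys"
  from nz have ys: "ys \<noteq> []" "regular_path ys" "set ys \<subseteq> {..<n}" unfolding bd_def by (auto split: if_splits)
  define v where "v = hd ys"
  define \<tau> where "\<tau> = steps n ys"
  have e: "ys = walk n v \<tau>" and v: "v < n" and tau: "\<forall>s\<in>set \<tau>. 0 < s \<and> s < n"
    using regular_path_walk_steps[OF ys] n unfolding v_def \<tau>_def by auto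
  have n4: "4 < n" using n by simp
  have tl: "\<forall>s\<in>set \<tau>. s < n" using tau by auto
  have "\<not> set \<tau> \<subseteq> S124" using na allowed_walk_iff[OF v tl n4] e by simp
  then obtain j where j: "j < length \<tau>" "\<tau>!j \<notin> S124" by (metis in_set_conv_nth subsetI)
  let ?u = "chain_of_coef n m c"
  have su: "allowed_supp n ?u" by (rule allowed_supp_chain_of_coef)
  have "?u (walk n ((v+n-s) mod n) (s#\<tau>)) = 0" "?u (walk n v (\<tau> @ [s])) = 0" if "s \<in> S124" for s
    by (rule allowed_supp_walk_outside[OF su n4 _ _ _ j(2)]; use n4 v that tl j(1) in auto)+
  moreover have "split_term n ?u v \<tau> k = 0" if "k < length \<tau>" for k
    by (rule split_term_chain_of_coef_non_step[OF n v tl j that])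
  ultimately have "bd n ?u ys = 0"
    unfolding e bd_walk[OF n4 su v tau] by simp
  then show False using nz by simp
qed

lemma chain_of_coef_Omega:
  assumes n: "10 < n"
  shows "chain_of_coef n m c \<in> Omega n S124 m"
proof (cases m)
  case 0 then show ?thesis using chain_of_coef_Apaths[of n] n by (simp add: Omega_def)
next
  case (Suc m')
  have ch: "bd n (chain_of_coef n m c) \<in> chains n m'"
    using bd_chains chain_of_coef_Apaths[of n m c] n Suc unfolding Apaths_def by auto
  then have "bd n (chain_of_coef n m c) \<in> Apaths n S124 m'"
    unfolding Apaths_def using bd_chain_of_coef_allowed[OF n] by auto
  then show ?thesis using chain_of_coef_Apaths[of n m c] n Suc by (simp add: Omega_def)
qed

definition alternating :: "nat \<Rightarrow> nat \<Rightarrow> ('k::field) chain \<Rightarrow> bool" where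
  "alternating n m u \<longleftrightarrow> u \<in> Apaths n S124 m \<and>
   (\<forall>v \<alpha> \<beta> s t. v < n \<longrightarrow> set \<alpha> \<subseteq> S124 \<longrightarrow> set \<beta> \<subseteq> S124 \<longrightarrow> s \<in> S124 \<longrightarrow> t \<in> S124 \<longrightarrow> s \<noteq> t \<longrightarrow>
       length \<alpha> + length \<beta> + 2 = m \<longrightarrow> u (walk n v (\<alpha>@[s,t]@\<beta>)) = - u (walk n v (\<alpha>@[t,s]@\<beta>))) \<and>
   (\<forall>v \<alpha> \<beta>. v < n \<longrightarrow> set \<alpha> \<subseteq> S124 \<longrightarrow> set \<beta> \<subseteq> S124 \<longrightarrow> length \<alpha> + length \<beta> + 2 = m \<longrightarrow>
       u (walk n v (\<alpha>@[4,4]@\<beta>)) = 0)"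

lemma Omega_Apaths: "u \<in> Omega n S m \<Longrightarrow> u \<in> Apaths n S m"
  unfolding Omega_def by (auto split: if_splits)

lemma Omega_bd_walk_non_step:
  assumes n: "10 < n" and u: "u \<in> Omega n S124 (Suc m)"
    and v: "v < n" and ab: "set \<alpha> \<subseteq> S124" "set \<beta> \<subseteq> S124" and d: "d \<notin> S124" "d < n"
  shows "bd n u (walk n v (\<alpha>@[d]@\<beta>)) = 0"
proof (rule ccontr)
  assume nz: "bd n u (walk n v (\<alpha>@[d]@\<beta>)) \<noteq> 0"
  have "bd n u \<in> Apaths n S124 m" using u unfolding Omega_def by simp
  then have "allowed_path n S124 (walk n v (\<alpha>@[d]@\<beta>))" using nz unfolding Apaths_def by blast
  moreover have "\<forall>s\<in>set (\<alpha>@[d]@\<beta>). s < n" using ab d n by auto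
  ultimately have "set (\<alpha>@[d]@\<beta>) \<subseteq> S124" using allowed_walk_iff[OF v] n by simp
  then show False using d(1) by simp
qed

lemma Omega_swap:
  assumes n: "10 < n" and u: "u \<in> Omega n S124 (Suc m)"
    and v: "v < n" and ab: "set \<alpha> \<subseteq> S124" "set \<beta> \<subseteq> S124" and st: "s \<in> S124" "t \<in> S124" "s \<noteq> t"
  shows "u (walk n v (\<alpha>@[s,t]@\<beta>)) = - u (walk n v (\<alpha>@[t,s]@\<beta>))"
proof -
  have su: "allowed_supp n u" using Apaths_allowed_supp[OF Omega_Apaths[OF u]] .
  have d: "s + t \<notin> S124" "0 < s + t" "s + t < n" using st n by auto
  have "0 = bd n u (walk n v (\<alpha>@[s+t]@\<beta>))" using Omega_bd_walk_non_step[OF n u v ab d(1,3)] by simp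
  also have "\<dots> = (-1)^(Suc (length \<alpha>)) *
     (\<Sum>s'\<in>S124. \<Sum>t'\<in>S124. if (s'+t') mod n = s + t then u (walk n v (\<alpha>@[s',t']@\<beta>)) else 0)"
    by (rule bd_walk_non_step[OF n su v ab d])
  also have "(\<Sum>s'\<in>S124. \<Sum>t'\<in>S124. if (s'+t') mod n = s + t then u (walk n v (\<alpha>@[s',t']@\<beta>)) else 0)
     = u (walk n v (\<alpha>@[s,t]@\<beta>)) + u (walk n v (\<alpha>@[t,s]@\<beta>))"
    by (rule split_sum_pair) (use st n in auto)
  finally show ?thesis by (simp add: eq_neg_iff_add_eq_0)
qed

lemma Omega_44:
  assumes n: "10 < n" and u: "u \<in> Omega n S124 (Suc m)"
    and v: "v < n" and ab: "set \<alpha> \<subseteq> S124" "set \<beta> \<subseteq> S124"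
  shows "u (walk n v (\<alpha>@[4,4]@\<beta>)) = 0"
proof -
  have su: "allowed_supp n u" using Apaths_allowed_supp[OF Omega_Apaths[OF u]] .
  have d: "(8::nat) \<notin> S124" "0 < (8::nat)" "8 < n" using n by auto
  have "0 = bd n u (walk n v (\<alpha>@[8]@\<beta>))" using Omega_bd_walk_non_step[OF n u v ab d(1,3)] by simp
  also have "\<dots> = (-1)^(Suc (length \<alpha>)) *
     (\<Sum>s'\<in>S124. \<Sum>t'\<in>S124. if (s'+t') mod n = 8 then u (walk n v (\<alpha>@[s',t']@\<beta>)) else 0)"
    by (rule bd_walk_non_step[OF n su v ab d])
  also have "(\<Sum>s'\<in>S124. \<Sum>t'\<in>S124. if (s'+t') mod n = 8 then u (walk n v (\<alpha>@[s',t']@\<beta>)) else 0)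
     = u (walk n v (\<alpha>@[4,4]@\<beta>))"
    by (rule split_sum_8) (use n in auto)
  finally show ?thesis by simp
qed

lemma Omega_alternating:
  assumes n: "10 < n" and u: "u \<in> Omega n S124 m"
  shows "alternating n m u"
  unfolding alternating_def
proof (intro conjI allI impI)
  show "u \<in> Apaths n S124 m" using Omega_Apaths[OF u] .
  fix v \<alpha> \<beta>
  assume "v < n" "set \<alpha> \<subseteq> S124" "set \<beta> \<subseteq> S124" and len: "length \<alpha> + length \<beta> + 2 = m"
  moreover have "u \<in> Omega n S124 (Suc (m - 1))" using u len by simp
  ultimately show "u (walk n v (\<alpha>@[4,4]@\<beta>)) = 0" by (intro Omega_44[OF n])
next
  fix v \<alpha> \<beta> s t
  assume "v < n" "set \<alpha> \<subseteq> S124" "set \<beta> \<subseteq> S124" "s \<in> S124" "t \<in> S124" "s \<noteq> t"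
    and len: "length \<alpha> + length \<beta> + 2 = m"
  moreover have "u \<in> Omega n S124 (Suc (m - 1))" using u len by simp
  ultimately show "u (walk n v (\<alpha>@[s,t]@\<beta>)) = - u (walk n v (\<alpha>@[t,s]@\<beta>))" by (intro Omega_swap[OF n])
qed

lemma alternating_walk:
  assumes a: "alternating n m u" and v: "v < n" and sig: "set \<sigma> \<subseteq> S124" and ls: "length \<sigma> = m"
  shows "u (walk n v \<sigma>) = (if count_list \<sigma> 4 \<le> 1
    then (-1)^inversions \<sigma> * u (walk n v (sorted_steps (count_list \<sigma> 1) (count_list \<sigma> 2) (count_list \<sigma> 4)))
    else 0)"
proof -
  let ?f = "\<lambda>\<sigma>. u (walk n v \<sigma>)"
  let ?c1 = "count_list \<sigma> 1" and ?c2 = "count_list \<sigma> 2" and ?c4 = "count_list \<sigma> 4"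
  have sw: "?f (\<alpha>@[s,t]@\<beta>) = - ?f (\<alpha>@[t,s]@\<beta>)"
    if "s\<in>S124" "t\<in>S124" "s\<noteq>t" "set \<alpha> \<subseteq> S124" "set \<beta> \<subseteq> S124" "length \<alpha> + length \<beta> + 2 = m" for \<alpha> \<beta> s t
    using a v that unfolding alternating_def by blast
  have ss: "?f \<sigma> = (-1)^inversions \<sigma> * ?f (sorted_steps ?c1 ?c2 ?c4)"
    by (rule alternating_sort_sign[where f="\<lambda>\<sigma>. u (walk n v \<sigma>)", OF sw sig ls]) auto
  have "?f (sorted_steps ?c1 ?c2 ?c4) = 0" if c4: "\<not> ?c4 \<le> 1"
  proof -
    have e: "sorted_steps ?c1 ?c2 ?c4 = (replicate ?c1 1 @ replicate ?c2 2 @ replicate (?c4-2) 4) @ [4,4] @ []"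
      using c4 by (intro sorted_steps_44) simp
    have len: "length (replicate ?c1 1 @ replicate ?c2 2 @ replicate (?c4-2) 4) + length ([]::nat list) + 2 = m"
      using count_list_S124_sum[OF sig] ls c4 by simp
    show ?thesis unfolding e
      by (rule a[unfolded alternating_def, THEN conjunct2, THEN conjunct2, rule_format, OF v]) (use len in auto)
  qed
  then show ?thesis using ss by simp
qed

lemma alternating_chain_of_coef_of_chain:
  assumes n: "10 < n" and a: "alternating n m u"
  shows "chain_of_coef n m (coef_of_chain n u) = u"
proof
  fix xs
  have n4: "4 < n" using n by simp
  have Ap: "u \<in> Apaths n S124 m" using a unfolding alternating_def by blast
  show "chain_of_coef n m (coef_of_chain n u) xs = u xs"
  proof (cases "xs \<noteq> [] \<and> set xs \<subseteq> {..<n} \<and> length xs = Suc m \<and> allowed_path n S124 xs")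
    case False
    then have "u xs = 0" using Ap unfolding Apaths_def chains_def vpaths_def by auto
    moreover have "chain_of_coef n m (coef_of_chain n u) xs = 0" using False unfolding chain_of_coef_def by auto
    ultimately show ?thesis by simp
  next
    case True
    then have d: "xs = walk n (hd xs) (steps n xs)" "set (steps n xs) \<subseteq> S124" "hd xs < n"
      using allowed_path_walk_steps[of xs n] n4 by auto
    define v where "v = hd xs"
    define \<sigma> where "\<sigma> = steps n xs"
    have xs: "xs = walk n v \<sigma>" and sig: "set \<sigma> \<subseteq> S124" and v: "v < n"
      using d unfolding v_def \<sigma>_def by auto
    have ls: "length \<sigma> = m" using True xs by (metis Suc_inject length_walk)
    have sl: "\<forall>s\<in>set \<sigma>. s < n" using sig n4 by auto
    show ?thesis
      unfolding xs chain_of_coef_walk[OF n4 v sl] coef_of_chain_def alternating_walk[OF a v sig ls]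
      using ls sig v by simp
  qed
qed

lemma Omega_iff_chain_of_coef:
  assumes n: "10 < n"
  shows "u \<in> Omega n S124 m \<longleftrightarrow> (\<exists>c. periodic n c \<and> u = chain_of_coef n m c)"
proof
  assume u: "u \<in> Omega n S124 m"
  have "chain_of_coef n m (coef_of_chain n u) = u" by (rule alternating_chain_of_coef_of_chain[OF n Omega_alternating[OF n u]])
  then show "\<exists>c. periodic n c \<and> u = chain_of_coef n m c" using periodic_coef_of_chain by metis
next
  assume "\<exists>c. periodic n c \<and> u = chain_of_coef n m c"
  then show "u \<in> Omega n S124 m" using chain_of_coef_Omega[OF n] by auto
qed

section \<open>The boundary of a coefficient chain\<close>

text \<open>The boundary transported along \<open>chain_of_coef\<close> (lemma \<open>bd_chain_of_coef\<close>): the first three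
  lines come from deleting the first or the last vertex, the last two from merging the steps
  \<open>1 + 1 = 2\<close> and \<open>2 + 2 = 4\<close> inside a sorted word.\<close>

definition dcoef :: "('k::field) coef \<Rightarrow> 'k coef" where
"dcoef c v a b e = (if e \<le> 1 then
   c (v-1) (a+1) b e - (-1)^a * c v (a+1) b e
 + (-1)^a * c (v-2) a (b+1) e - (-1)^(a+b) * c v a (b+1) e
 + (if e = 0 then (-1)^(a+b) * (c (v-4) a b 1 - c v a b 1) else 0)
 - (if odd b then (-1)^a * c v (a+2) (b-1) e else 0)
 - (if e = 1 then (-1)^(a+b) * c v a (b+2) 0 else 0)
 else 0)"

lemma dcoef_dcoef: "dcoef (dcoef c) v a b e = 0"
proof -
  consider "e = 0" | "e = 1" | "e > 1" by linarith
  then show ?thesis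
  proof cases
    case 1
    then show ?thesis
      by (cases "even a"; cases "even b") (simp_all add: dcoef_def algebra_simps)
  next
    case 2
    then show ?thesis
      by (cases "even a"; cases "even b") (simp_all add: dcoef_def algebra_simps)
  qed (simp add: dcoef_def)
qed

lemma periodic_dcoef: "periodic n w \<Longrightarrow> periodic n (dcoef w)"
  unfolding periodic_def
proof (intro allI ext)
  fix v a b e assume p: "\<forall>v. w v = w (v mod int n)"
  hence pw: "periodic n w" by (simp add: periodic_def)
  have q: "w (v mod int n) = w v" using p by metis
  show "dcoef w v a b e = dcoef w (v mod int n) a b e"
    unfolding dcoef_def using periodic_diff_mod[OF pw, of v] q by simp
qed

lemma dcoef_add: "dcoef (\<lambda>v a b e. w v a b e + d v a b e) = (\<lambda>v a b e. dcoef w v a b e + dcoef d v a b e)"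
  by (intro ext) (simp add: dcoef_def algebra_simps)

lemma dcoef_diff: "dcoef (\<lambda>v a b e. w v a b e - d v a b e) = (\<lambda>v a b e. dcoef w v a b e - dcoef d v a b e)"
  by (intro ext) (simp add: dcoef_def algebra_simps)

lemma dcoef_smult: "dcoef (\<lambda>v a b e. k * w v a b e) = (\<lambda>v a b e. k * dcoef w v a b e)"
  by (intro ext) (simp add: dcoef_def algebra_simps)

lemma split_term_left:
  assumes "k < length \<alpha>"
  shows "split_term n u v (\<alpha>@[x,y]@\<beta>) k = (-1)^(Suc k) * (\<Sum>s\<in>S124. \<Sum>t\<in>S124. if (s+t) mod n = \<alpha>!k then
      u (walk n v ((take k \<alpha> @ [s,t] @ drop (Suc k) \<alpha>) @ [x,y] @ \<beta>)) else 0)"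
proof -
  have t: "take k (\<alpha>@[x,y]@\<beta>) = take k \<alpha>" using assms by simp
  have d: "drop (Suc k) (\<alpha>@[x,y]@\<beta>) = drop (Suc k) \<alpha> @ [x,y] @ \<beta>" using assms by simp
  have i: "(\<alpha>@[x,y]@\<beta>) ! k = \<alpha>!k" using assms by (simp add: nth_append)
  show ?thesis unfolding split_term_def t d i by (simp only: append_assoc append.simps)
qed

lemma split_term_right:
  assumes "k < length \<beta>"
  shows "split_term n u v (\<alpha>@[x,y]@\<beta>) (length \<alpha> + 2 + k) = (-1)^(Suc (length \<alpha> + 2 + k)) * (\<Sum>s\<in>S124. \<Sum>t\<in>S124. if (s+t) mod n = \<beta>!k then
      u (walk n v (\<alpha> @ [x,y] @ (take k \<beta> @ [s,t] @ drop (Suc k) \<beta>))) else 0)"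
proof -
  have t: "take (length \<alpha> + 2 + k) (\<alpha>@[x,y]@\<beta>) = \<alpha>@[x,y]@take k \<beta>" by simp
  have d: "drop (Suc (length \<alpha> + 2 + k)) (\<alpha>@[x,y]@\<beta>) = drop (Suc k) \<beta>"
    by (simp add: numeral_3_eq_3)
  have i: "(\<alpha>@[x,y]@\<beta>) ! (length \<alpha> + 2 + k) = \<beta>!k" by (simp add: nth_append)
  show ?thesis unfolding split_term_def t d i by (simp only: append_assoc append.simps)
qed

lemma split_term_mid1: "split_term n u v (\<alpha>@[x,y]@\<beta>) (length \<alpha>) = (-1)^(Suc (length \<alpha>)) * (\<Sum>s\<in>S124. \<Sum>t\<in>S124. if (s+t) mod n = x then
      u (walk n v (\<alpha> @ [s,t,y] @ \<beta>)) else 0)"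
  unfolding split_term_def by simp

lemma split_term_mid2: "split_term n u v (\<alpha>@[x,y]@\<beta>) (Suc (length \<alpha>)) = (-1)^(Suc (Suc (length \<alpha>))) * (\<Sum>s\<in>S124. \<Sum>t\<in>S124. if (s+t) mod n = y then
      u (walk n v (\<alpha> @ [x,s,t] @ \<beta>)) else 0)"
  unfolding split_term_def by (simp add: nth_append)

lemma sum_lessThan_add_split:
  fixes f :: "nat \<Rightarrow> 'k::field"
  shows "(\<Sum>k<x + y. f k) = (\<Sum>k<x. f k) + (\<Sum>k<y. f (x + k))"
  by (induction y) (simp_all add: add.assoc)

lemma sum_split_terms_decomp:
  fixes f :: "nat \<Rightarrow> 'k::field"
  shows "(\<Sum>k<length (\<alpha>@[x,y]@\<beta>). f k) = (\<Sum>k<length \<alpha>. f k) + f (length \<alpha>) + f (Suc (length \<alpha>))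
     + (\<Sum>k<length \<beta>. f (length \<alpha> + 2 + k))"
proof -
  have "length (\<alpha>@[x,y]@\<beta>) = length \<alpha> + 2 + length \<beta>" by simp
  then have "(\<Sum>k<length (\<alpha>@[x,y]@\<beta>). f k) = (\<Sum>k<length \<alpha> + 2. f k) + (\<Sum>k<length \<beta>. f (length \<alpha> + 2 + k))"
    using sum_lessThan_add_split[where x="length \<alpha> + 2" and y="length \<beta>" and f=f] by simp
  also have "(\<Sum>k<length \<alpha> + 2. f k) = (\<Sum>k<length \<alpha>. f k) + f (length \<alpha>) + f (Suc (length \<alpha>))"
    by (simp add: numeral_2_eq_2)
  finally show ?thesis .
qed

lemma split_sum_neg:
  assumes "\<And>p q. p \<in> S124 \<Longrightarrow> q \<in> S124 \<Longrightarrow> F p q = - G p q"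
  shows "(-1)^j * (\<Sum>p\<in>S124. \<Sum>q\<in>S124. if (p+q) mod n = d then F p q else 0)
    = - ((-1)^j * (\<Sum>p\<in>S124. \<Sum>q\<in>S124. if (p+q) mod n = d then G p q else (0::'k::field)))"
proof -
  have "(\<Sum>p\<in>S124. \<Sum>q\<in>S124. if (p+q) mod n = d then F p q else 0)
      = (\<Sum>p\<in>S124. \<Sum>q\<in>S124. - (if (p+q) mod n = d then G p q else 0))"
    using assms by (intro sum.cong refl) simp
  then show ?thesis by (simp only: sum_negf mult_minus_right)
qed

lemma split_term_swap_left:
  assumes k: "k < length \<alpha>" and \<alpha>: "set \<alpha> \<subseteq> S124"
    and antisym: "\<And>\<gamma>. set \<gamma> \<subseteq> S124 \<Longrightarrow> u (walk n v (\<gamma>@[s,t]@\<beta>)) = - u (walk n v (\<gamma>@[t,s]@\<beta>))"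
  shows "split_term n u v (\<alpha>@[s,t]@\<beta>) k = - split_term n u v (\<alpha>@[t,s]@\<beta>) k"
  unfolding split_term_left[OF k]
  by (rule split_sum_neg, rule antisym) (use \<alpha> in \<open>auto dest: in_set_takeD in_set_dropD\<close>)

lemma split_term_swap_right:
  assumes k: "k < length \<beta>" and \<beta>: "set \<beta> \<subseteq> S124"
    and antisym: "\<And>\<delta>. set \<delta> \<subseteq> S124 \<Longrightarrow> u (walk n v (\<alpha>@[s,t]@\<delta>)) = - u (walk n v (\<alpha>@[t,s]@\<delta>))"
  shows "split_term n u v (\<alpha>@[s,t]@\<beta>) (length \<alpha> + 2 + k) = - split_term n u v (\<alpha>@[t,s]@\<beta>) (length \<alpha> + 2 + k)"
  unfolding split_term_right[OF k]
  by (rule split_sum_neg, rule antisym) (use \<beta> in \<open>auto dest: in_set_takeD in_set_dropD\<close>)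

lemma bd_chain_of_coef_swap:
  fixes c :: "('k::field) coef"
  assumes n: "10 < n" and v: "v < n" and ab: "set \<alpha> \<subseteq> S124" "set \<beta> \<subseteq> S124"
    and st: "s \<in> S124" "t \<in> S124" "s \<noteq> t"
  shows "bd n (chain_of_coef n m c) (walk n v (\<alpha>@[s,t]@\<beta>)) = - bd n (chain_of_coef n m c) (walk n v (\<alpha>@[t,s]@\<beta>))"
proof -
  have n4: "4 < n" and n8: "8 < n" using n by auto
  let ?u = "chain_of_coef n m c"
  let ?t1 = "\<alpha>@[s,t]@\<beta>" and ?t2 = "\<alpha>@[t,s]@\<beta>"
  have su: "allowed_supp n ?u" by (rule allowed_supp_chain_of_coef)
  have swap: "?u (walk n v' (\<gamma>@[s,t]@\<delta>)) = - ?u (walk n v' (\<gamma>@[t,s]@\<delta>))"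
    if "v' < n" "set \<gamma> \<subseteq> S124" "set \<delta> \<subseteq> S124" for v' \<gamma> \<delta>
  proof -
    have "\<forall>x\<in>set \<gamma> \<union> set \<delta>. x < n" "s < n" "t < n" using that st n4 by auto
    then show ?thesis using chain_of_coef_swap[OF n4 that(1)] st(3) by blast
  qed
  have abl: "\<forall>x\<in>set \<alpha> \<union> set \<beta>. x < n" using ab n4 by auto
  have bd_t: "bd n ?u (walk n v \<tau>) = (\<Sum>r\<in>S124. ?u (walk n ((v+n-r) mod n) (r#\<tau>)))
      + (\<Sum>k<length \<tau>. split_term n ?u v \<tau> k) + (-1)^(Suc (length \<tau>)) * (\<Sum>r\<in>S124. ?u (walk n v (\<tau> @ [r])))"
    if "set \<tau> \<subseteq> S124" for \<tau>
  proof (rule bd_walk[OF n4 su v])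
    show "\<forall>s\<in>set \<tau>. 0 < s \<and> s < n" using that n by auto
  qed
  have t12: "set ?t1 \<subseteq> S124" "set ?t2 \<subseteq> S124" using ab st by auto
  have A: "(\<Sum>r\<in>S124. ?u (walk n ((v+n-r) mod n) (r#?t1))) = - (\<Sum>r\<in>S124. ?u (walk n ((v+n-r) mod n) (r#?t2)))"
    unfolding sum_negf[symmetric] using swap[of _ "_ # \<alpha>" \<beta>] ab n4 by (intro sum.cong refl) simp
  have C: "(\<Sum>r\<in>S124. ?u (walk n v (?t1 @ [r]))) = - (\<Sum>r\<in>S124. ?u (walk n v (?t2 @ [r])))"
    unfolding sum_negf[symmetric] using swap[OF v ab(1), of "\<beta> @ [_]"] ab(2) by (intro sum.cong refl) simp
  have L: "(\<Sum>k<length \<alpha>. split_term n ?u v ?t1 k) = - (\<Sum>k<length \<alpha>. split_term n ?u v ?t2 k)"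
    unfolding sum_negf[symmetric]
    by (intro sum.cong refl split_term_swap_left ab swap v) (simp_all add: ab)
  have R: "(\<Sum>k<length \<beta>. split_term n ?u v ?t1 (length \<alpha> + 2 + k))
      = - (\<Sum>k<length \<beta>. split_term n ?u v ?t2 (length \<alpha> + 2 + k))"
    unfolding sum_negf[symmetric]
    by (intro sum.cong refl split_term_swap_right ab swap v) (simp_all add: ab)
  let ?SS = "\<lambda>x (G::nat \<Rightarrow> nat \<Rightarrow> 'k). (\<Sum>p\<in>S124. \<Sum>q\<in>S124. if (p+q) mod n = x then G p q else 0)"
  have ds: "?SS x (\<lambda>p q. ?u (walk n v (\<alpha>@[p,q,y]@\<beta>))) = ?SS x (\<lambda>p q. ?u (walk n v (\<alpha>@[y,p,q]@\<beta>)))"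
    if "x \<in> S124" "y \<in> S124" for x y
    unfolding split_sum_S124[OF that(1) n8]
    using chain_of_coef_move_pair[OF n4 v abl, of 1 y] chain_of_coef_move_pair[OF n4 v abl, of 2 y] that n4 by auto
  have M: "split_term n ?u v ?t1 (length \<alpha>) + split_term n ?u v ?t1 (Suc (length \<alpha>))
      + (split_term n ?u v ?t2 (length \<alpha>) + split_term n ?u v ?t2 (Suc (length \<alpha>))) = 0"
    unfolding split_term_mid1 split_term_mid2 using ds[OF st(1) st(2)] ds[OF st(2) st(1)]
    by (simp add: algebra_simps)
  have length_swap: "length ?t2 = length ?t1" by simp
  have cancel: "(A1 + (L1 + M1 + M2 + R1) + z * C1) + (A2 + (L2 + N1 + N2 + R2) + z * C2) = (0::'k)"
    if "A1 = - A2" "C1 = - C2" "L1 = - L2" "R1 = - R2" "M1 + M2 + (N1 + N2) = 0"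
    for A1 A2 C1 C2 L1 L2 R1 R2 M1 M2 N1 N2 z :: 'k
    using that by (simp add: algebra_simps)
  have "bd n ?u (walk n v ?t1) + bd n ?u (walk n v ?t2) = 0"
    unfolding bd_t[OF t12(1)] bd_t[OF t12(2)] sum_split_terms_decomp length_swap
    by (rule cancel[OF A C L R M])
  then show ?thesis by (simp add: eq_neg_iff_add_eq_0)
qed

lemma bd_chain_of_coef_44:
  fixes c :: "('k::field) coef"
  assumes n: "10 < n" and v: "v < n" and ab: "set \<alpha> \<subseteq> S124" "set \<beta> \<subseteq> S124"
  shows "bd n (chain_of_coef n m c) (walk n v (\<alpha>@[4,4]@\<beta>)) = 0"
proof -
  have n4: "4 < n" and n8: "8 < n" using n by auto
  let ?u = "chain_of_coef n m c"
  let ?t = "\<alpha>@[4,4]@\<beta>"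
  have abl: "\<forall>x\<in>set \<alpha> \<union> set \<beta>. x < n" using ab n4 by auto
  have e: "bd n ?u (walk n v ?t) = (\<Sum>r\<in>S124. ?u (walk n ((v+n-r) mod n) (r#?t)))
    + (\<Sum>k<length ?t. split_term n ?u v ?t k) + (-1)^(Suc (length ?t)) * (\<Sum>r\<in>S124. ?u (walk n v (?t @ [r])))"
    by (rule bd_walk[OF n4 allowed_supp_chain_of_coef v]) (use ab n in auto)
  have fours: "?u (walk n v' (\<gamma> @ [4,4] @ \<delta>)) = 0" if "v' < n" "set \<gamma> \<subseteq> S124" "set \<delta> \<subseteq> S124" for v' \<gamma> \<delta>
    by (rule chain_of_coef_two_fours[OF n4 that(1)]) (use that n4 in auto)
  have A: "(\<Sum>r\<in>S124. ?u (walk n ((v+n-r) mod n) (r#?t))) = 0"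
    using fours[of _ "_ # \<alpha>" \<beta>] ab n4 by (intro sum.neutral ballI) simp
  have C: "(\<Sum>r\<in>S124. ?u (walk n v (?t @ [r]))) = 0"
    using fours[OF v ab(1), of "\<beta> @ [_]"] ab(2) by (intro sum.neutral ballI) simp
  have L: "(\<Sum>k<length \<alpha>. split_term n ?u v ?t k) = 0"
  proof (intro sum.neutral ballI)
    fix k assume "k \<in> {..<length \<alpha>}"
    then have k: "k < length \<alpha>" by simp
    have "?u (walk n v ((take k \<alpha> @ [p,q] @ drop (Suc k) \<alpha>) @ [4,4] @ \<beta>)) = 0" if "p \<in> S124" "q \<in> S124" for p q
      by (rule fours[OF v _ ab(2)]) (use ab(1) that in \<open>auto dest: in_set_takeD in_set_dropD\<close>)
    then show "split_term n ?u v ?t k = 0" unfolding split_term_left[OF k] by (auto intro!: sum.neutral)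
  qed
  have R: "(\<Sum>k<length \<beta>. split_term n ?u v ?t (length \<alpha> + 2 + k)) = 0"
  proof (intro sum.neutral ballI)
    fix k assume "k \<in> {..<length \<beta>}"
    then have k: "k < length \<beta>" by simp
    have "?u (walk n v (\<alpha> @ [4,4] @ (take k \<beta> @ [p,q] @ drop (Suc k) \<beta>))) = 0" if "p \<in> S124" "q \<in> S124" for p q
      by (rule fours[OF v ab(1)]) (use ab(2) that in \<open>auto dest: in_set_takeD in_set_dropD\<close>)
    then show "split_term n ?u v ?t (length \<alpha> + 2 + k) = 0" unfolding split_term_right[OF k] by (auto intro!: sum.neutral)
  qed
  have M: "split_term n ?u v ?t (length \<alpha>) + split_term n ?u v ?t (Suc (length \<alpha>)) = 0"
  proof -
    have s1: "(\<Sum>p\<in>S124. \<Sum>q\<in>S124. if (p+q) mod n = 4 then ?u (walk n v (\<alpha>@[p,q,4]@\<beta>)) else 0) = ?u (walk n v (\<alpha>@[2,2,4]@\<beta>))"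
      using split_sum_S124[OF _ n8, where x=4 and G="\<lambda>p q. ?u (walk n v (\<alpha>@[p,q,4]@\<beta>))"] by simp
    have s2: "(\<Sum>p\<in>S124. \<Sum>q\<in>S124. if (p+q) mod n = 4 then ?u (walk n v (\<alpha>@[4,p,q]@\<beta>)) else 0) = ?u (walk n v (\<alpha>@[4,2,2]@\<beta>))"
      using split_sum_S124[OF _ n8, where x=4 and G="\<lambda>p q. ?u (walk n v (\<alpha>@[4,p,q]@\<beta>))"] by simp
    have "?u (walk n v (\<alpha>@[2,2,4]@\<beta>)) = ?u (walk n v (\<alpha>@[4,2,2]@\<beta>))"
      using chain_of_coef_move_pair[OF n4 v abl, of 2 4] n4 by simp
    then show ?thesis unfolding split_term_mid1 split_term_mid2 s1 s2 by simp
  qed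
  show ?thesis unfolding e sum_split_terms_decomp A C L R
    using M by (simp only: add_0_left add_0_right mult_zero_right)
qed

lemma alternating_bd_chain_of_coef:
  assumes n: "10 < n"
  shows "alternating n m (bd n (chain_of_coef n (Suc m) c))"
  unfolding alternating_def
proof (intro conjI allI impI)
  show "bd n (chain_of_coef n (Suc m) c) \<in> Apaths n S124 m"
    using chain_of_coef_Omega[OF n, of "Suc m" c] unfolding Omega_def by simp
  fix v \<alpha> \<beta>
  assume "v < n" "set \<alpha> \<subseteq> S124" "set \<beta> \<subseteq> S124"
  then show "bd n (chain_of_coef n (Suc m) c) (walk n v (\<alpha>@[4,4]@\<beta>)) = 0"
    by (rule bd_chain_of_coef_44[OF n])
next
  fix v \<alpha> \<beta> s t
  assume "v < n" "set \<alpha> \<subseteq> S124" "set \<beta> \<subseteq> S124" "s \<in> S124" "t \<in> S124" "s \<noteq> t"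
  then show "bd n (chain_of_coef n (Suc m) c) (walk n v (\<alpha>@[s,t]@\<beta>))
      = - bd n (chain_of_coef n (Suc m) c) (walk n v (\<alpha>@[t,s]@\<beta>))"
    by (rule bd_chain_of_coef_swap[OF n])
qed

lemma sum_neg_one_power: "(\<Sum>i<b. (-1::'k::field)^i) = (if odd b then 1 else 0)"
  by (induction b) auto

lemma sum_front_sorted_steps:
  assumes n: "10 < n" and p: "periodic n c" and cl: "cell m a b e" and w: "w = nat (v mod int n)"
  shows "(\<Sum>s\<in>S124. chain_of_coef n (Suc m) c (walk n ((w+n-s) mod n) (s # sorted_steps a b e))) =
     c (v-1) (a+1) b e + (-1)^a * c (v-2) a (b+1) e + (if e = 0 then (-1)^(a+b) * c (v-4) a b 1 else 0)"
proof -
  have n4: "4 < n" and n0: "0 < n" using n by auto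
  have cws: "c (int ((w + n - r) mod n)) = c (v - int r)" if "r \<le> n" for r
    by (rule periodic_sub_mod[OF p w that n0])
  have m: "a + b + e = m" "e \<le> 1" using cl unfolding cell_def by auto
  have sl: "\<forall>s\<in>set (r # sorted_steps a b e). s < n" if "r \<in> S124" for r
    using set_sorted_steps[of a b e] that n by auto
  have wl: "(w + n - r) mod n < n" for r using n0 by simp
  let ?u = "chain_of_coef n (Suc m) c" and ?\<tau> = "sorted_steps a b e"
  have "?u (walk n ((w+n-1) mod n) (1#?\<tau>)) = c (v-1) (a+1) b e"
    using chain_of_coef_walk[OF n4 wl sl[of 1], of "Suc m" c] m set_sorted_steps[of a b e] cws[of 1] n4
    by (simp del: inversions.simps add: inversions_Cons_sorted_steps)
  moreover have "?u (walk n ((w+n-2) mod n) (2#?\<tau>)) = (-1)^a * c (v-2) a (b+1) e"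
    using chain_of_coef_walk[OF n4 wl sl[of 2], of "Suc m" c] m set_sorted_steps[of a b e] cws[of 2] n4
    by (simp del: inversions.simps add: inversions_Cons_sorted_steps)
  moreover have "?u (walk n ((w+n-4) mod n) (4#?\<tau>)) = (if e = 0 then (-1)^(a+b) * c (v-4) a b 1 else 0)"
    using chain_of_coef_walk[OF n4 wl sl[of 4], of "Suc m" c] m set_sorted_steps[of a b e] cws[of 4] n4
    by (simp del: inversions.simps add: inversions_Cons_sorted_steps)
  ultimately show ?thesis unfolding sum_S124 by simp
qed

lemma sum_back_sorted_steps:
  assumes n: "10 < n" and p: "periodic n c" and cl: "cell m a b e" and w: "w = nat (v mod int n)"
  shows "(\<Sum>s\<in>S124. chain_of_coef n (Suc m) c (walk n w (sorted_steps a b e @ [s]))) =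
     (-1)^(b+e) * c v (a+1) b e + (-1)^e * c v a (b+1) e + (if e = 0 then c v a b 1 else 0)"
proof -
  have n4: "4 < n" and n0: "0 < n" using n by auto
  have wn: "w < n" unfolding w using n0 by (simp add: nat_less_iff)
  have cw: "c (int w) = c v" by (rule periodic_nat_mod[OF p w n0])
  have m: "a + b + e = m" "e \<le> 1" using cl unfolding cell_def by auto
  have sl: "\<forall>s\<in>set (sorted_steps a b e @ [r]). s < n" if "r \<in> S124" for r
    using set_sorted_steps[of a b e] that n by auto
  let ?u = "chain_of_coef n (Suc m) c" and ?\<tau> = "sorted_steps a b e"
  have "?u (walk n w (?\<tau> @ [1])) = (-1)^(b+e) * c v (a+1) b e"
    using chain_of_coef_walk[OF n4 wn sl[of 1], of "Suc m" c] m set_sorted_steps[of a b e] cw n4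
    by (simp del: inversions.simps add: inversions_sorted_steps_snoc)
  moreover have "?u (walk n w (?\<tau> @ [2])) = (-1)^e * c v a (b+1) e"
    using chain_of_coef_walk[OF n4 wn sl[of 2], of "Suc m" c] m set_sorted_steps[of a b e] cw n4
    by (simp del: inversions.simps add: inversions_sorted_steps_snoc)
  moreover have "?u (walk n w (?\<tau> @ [4])) = (if e = 0 then c v a b 1 else 0)"
    using chain_of_coef_walk[OF n4 wn sl[of 4], of "Suc m" c] m set_sorted_steps[of a b e] cw n4
    by (simp del: inversions.simps add: inversions_sorted_steps_snoc)
  ultimately show ?thesis unfolding sum_S124 by simp
qed

lemma split_term_sorted_steps_2:
  assumes n: "10 < n" and p: "periodic n c" and cl: "cell m a b e" and w: "w = nat (v mod int n)"
    and i: "i < b"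
  shows "split_term n (chain_of_coef n (Suc m) c) w (sorted_steps a b e) (a+i) = (-1)^(Suc (a+i)) * c v (a+2) (b-1) e"
proof -
  have n4: "4 < n" and n8: "8 < n" and n0: "0 < n" using n by auto
  have wn: "w < n" unfolding w using n0 by (simp add: nat_less_iff)
  have cw: "c (int w) = c v" by (rule periodic_nat_mod[OF p w n0])
  have m: "a + b + e = m" "e \<le> 1" using cl unfolding cell_def by auto
  let ?u = "chain_of_coef n (Suc m) c" and ?\<tau> = "sorted_steps a b e"
  have cm: "?\<tau> ! (a+i) = 2" "take (a+i) ?\<tau> = replicate a 1 @ replicate i 2"
    "drop (Suc (a+i)) ?\<tau> = replicate (b - Suc i) 2 @ replicate e 4" using sorted_steps_split_2[OF i] by auto
  have sl: "\<forall>s\<in>set ((replicate a 1 @ replicate i 2) @ [1,1] @ replicate (b - Suc i) 2 @ replicate e 4). s < n"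
    using n by auto
  have "?u (walk n w ((replicate a 1 @ replicate i 2) @ [1,1] @ replicate (b - Suc i) 2 @ replicate e 4))
      = c v (a+2) (b-1) e"
    unfolding chain_of_coef_walk[OF n4 wn sl] using m i cw inversions_merge_11[of a i "b - Suc i" e] by auto
  moreover have merge: "(\<Sum>p\<in>S124. \<Sum>q\<in>S124. if (p+q) mod n = 2 then G p q else 0) = G 1 1"
    for G :: "nat \<Rightarrow> nat \<Rightarrow> 'a"
    using split_sum_S124[of 2 n G] n8 by simp
  ultimately show ?thesis unfolding split_term_def cm merge by simp
qed

lemma split_term_sorted_steps_4:
  assumes n: "10 < n" and p: "periodic n c" and cl: "cell m a b e" and w: "w = nat (v mod int n)"
    and e: "e = 1"
  shows "split_term n (chain_of_coef n (Suc m) c) w (sorted_steps a b e) (a+b) = (-1)^(Suc (a+b)) * c v a (b+2) 0"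
proof -
  have n4: "4 < n" and n8: "8 < n" and n0: "0 < n" using n by auto
  have wn: "w < n" unfolding w using n0 by (simp add: nat_less_iff)
  have cw: "c (int w) = c v" by (rule periodic_nat_mod[OF p w n0])
  have m: "a + b + e = m" "e \<le> 1" using cl unfolding cell_def by auto
  let ?u = "chain_of_coef n (Suc m) c" and ?\<tau> = "sorted_steps a b e"
  have cm: "?\<tau> ! (a+b) = 4" "take (a+b) ?\<tau> = replicate a 1 @ replicate b 2"
    "drop (Suc (a+b)) ?\<tau> = []" using sorted_steps_split_4 e by auto
  have sl: "\<forall>s\<in>set ((replicate a 1 @ replicate b 2) @ [2,2] @ []). s < n"
    using n by auto
  have "?u (walk n w ((replicate a 1 @ replicate b 2) @ [2,2] @ [])) = c v a (b+2) 0"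
    unfolding chain_of_coef_walk[OF n4 wn sl] using m e cw
    by (auto simp: inversions_append length_filter_replicate sum_list_replicate)
  moreover have merge: "(\<Sum>p\<in>S124. \<Sum>q\<in>S124. if (p+q) mod n = 4 then G p q else 0) = G 2 2"
    for G :: "nat \<Rightarrow> nat \<Rightarrow> 'a"
    using split_sum_S124[of 4 n G] n8 by simp
  ultimately show ?thesis unfolding split_term_def cm merge by simp
qed

text \<open>Inside a sorted word only \<open>2 = 1 + 1\<close> and \<open>4 = 2 + 2\<close> can be split; the \<open>b\<close> splittings of
  the \<open>2\<close>s alternate in sign and add up to the parity of \<open>b\<close>.\<close>

lemma sum_split_terms_sorted_steps:
  assumes n: "10 < n" and p: "periodic n c" and cl: "cell m a b e" and w: "w = nat (v mod int n)"
  shows "(\<Sum>k<length (sorted_steps a b e). split_term n (chain_of_coef n (Suc m) c) w (sorted_steps a b e) k) =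
     (if odd b then (-1)^(Suc a) * c v (a+2) (b-1) e else 0) + (if e = 1 then (-1)^(Suc (a+b)) * c v a (b+2) 0 else 0)"
proof -
  have n4: "4 < n" and n8: "8 < n" and n0: "0 < n" using n by auto
  have wn: "w < n" unfolding w using n0 by (simp add: nat_less_iff)
  have cw: "c (int w) = c v" by (rule periodic_nat_mod[OF p w n0])
  have m: "a + b + e = m" "e \<le> 1" using cl unfolding cell_def by auto
  let ?u = "chain_of_coef n (Suc m) c" and ?\<tau> = "sorted_steps a b e"
  let ?T = "split_term n ?u w ?\<tau>"
  have merge1: "(\<Sum>p\<in>S124. \<Sum>q\<in>S124. if (p+q) mod n = 1 then G p q else 0) = 0" for G :: "nat \<Rightarrow> nat \<Rightarrow> 'a"
    using split_sum_S124[of 1 n G] n8 by simp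
  have ones: "?T k = 0" if "k < a" for k
    unfolding split_term_def nth_sorted_steps_1[OF that] merge1 by simp
  have twos: "?T (a+i) = (-1)^(Suc (a+i)) * c v (a+2) (b-1) e" if "i < b" for i
    by (rule split_term_sorted_steps_2[OF n p cl w that])
  have four: "?T (a+b) = (-1)^(Suc (a+b)) * c v a (b+2) 0" if "e = 1"
    by (rule split_term_sorted_steps_4[OF n p cl w that])
  have "(\<Sum>k<length ?\<tau>. ?T k) = (\<Sum>k<a. ?T k) + (\<Sum>i<b. ?T (a+i)) + (\<Sum>i<e. ?T (a+b+i))"
    using sum_lessThan_add_split[where x="a+b" and y=e and f="?T"]
      sum_lessThan_add_split[where x=a and y=b and f="?T"] by simp
  also have "(\<Sum>k<a. ?T k) = 0" using ones by simp
  also have "(\<Sum>i<b. ?T (a+i)) = (-1)^(Suc a) * ((\<Sum>i<b. (-1)^i) * c v (a+2) (b-1) e)"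
    using twos by (simp add: power_add mult.assoc sum_distrib_left sum_distrib_right)
  also have "\<dots> = (if odd b then (-1)^(Suc a) * c v (a+2) (b-1) e else 0)"
    unfolding sum_neg_one_power by simp
  also have "(\<Sum>i<e. ?T (a+b+i)) = (if e = 1 then (-1)^(Suc (a+b)) * c v a (b+2) 0 else 0)"
  proof (cases "e = 1")
    case False
    then have "e = 0" using m(2) by simp
    then show ?thesis by simp
  qed (use four in simp)
  finally show ?thesis by simp
qed

lemma coef_of_chain_bd:
  assumes n: "10 < n" and p: "periodic n c" and cl: "cell m a b e"
  shows "coef_of_chain n (bd n (chain_of_coef n (Suc m) c)) v a b e = dcoef c v a b e"
proof -
  have n4: "4 < n" using n by simp
  define w where "w = nat (v mod int n)"
  have wn: "w < n" unfolding w_def using n by (simp add: nat_less_iff)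
  have m: "a + b + e = m" "e \<le> 1" using cl unfolding cell_def by auto
  have e01: "e = 0 \<or> e = 1" using m(2) by auto
  have tauS: "\<forall>s\<in>set (sorted_steps a b e). 0 < s \<and> s < n" using set_sorted_steps[of a b e] n by auto
  have "coef_of_chain n (bd n (chain_of_coef n (Suc m) c)) v a b e
      = bd n (chain_of_coef n (Suc m) c) (walk n w (sorted_steps a b e))"
    unfolding coef_of_chain_def w_def by simp
  also have "\<dots> = dcoef c v a b e"
    unfolding bd_walk[OF n4 allowed_supp_chain_of_coef wn tauS] sum_front_sorted_steps[OF n p cl w_def]
      sum_back_sorted_steps[OF n p cl w_def] sum_split_terms_sorted_steps[OF n p cl w_def]
    using m(1)[symmetric] e01
    by (cases "even a"; cases "even b"; elim disjE)
      (simp_all add: dcoef_def algebra_simps power_add neg_one_even_power neg_one_odd_power)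
  finally show ?thesis .
qed

lemma bd_chain_of_coef:
  assumes n: "10 < n" and p: "periodic n c"
  shows "bd n (chain_of_coef n (Suc m) c) = chain_of_coef n m (dcoef c)"
proof -
  have "bd n (chain_of_coef n (Suc m) c) = chain_of_coef n m (coef_of_chain n (bd n (chain_of_coef n (Suc m) c)))"
    by (rule alternating_chain_of_coef_of_chain[OF n alternating_bd_chain_of_coef[OF n], symmetric])
  also have "\<dots> = chain_of_coef n m (dcoef c)"
    by (rule chain_of_coef_cong) (use n coef_of_chain_bd[OF n p] in auto)
  finally show ?thesis .
qed

lemma tau_chain_of_coef:
  assumes n: "10 < n" and p: "periodic n c"
  shows "tau n (chain_of_coef n m c) = chain_of_coef n m (\<lambda>v. c (v - 1))"
proof
  fix ys
  have n4: "4 < n" and n0: "0 < n" using n by auto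
  show "tau n (chain_of_coef n m c) ys = chain_of_coef n m (\<lambda>v. c (v - 1)) ys"
  proof (cases "set ys \<subseteq> {..<n} \<and> ys \<noteq> []")
    case False
    then show ?thesis unfolding tau_def chain_of_coef_def by auto
  next
    case True
    have ms: "set (map (pred_mod n) ys) \<subseteq> {..<n}" using pred_mod_less n0 by auto
    have mne: "map (pred_mod n) ys \<noteq> []" using True by simp
    have st: "steps n (map (pred_mod n) ys) = steps n ys" using steps_map_pred_mod True by blast
    have al: "allowed_path n S124 (map (pred_mod n) ys) \<longleftrightarrow> allowed_path n S124 ys"
      using allowed_path_iff_steps[OF mne ms n4] allowed_path_iff_steps[of ys n] True n4 st by simp
    have h: "hd (map (pred_mod n) ys) = pred_mod n (hd ys)" using True by (cases ys) auto
    have hl: "hd ys < n" using True by (cases ys) auto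
    have ch: "c (int (pred_mod n (hd ys))) = c (int (hd ys) - 1)"
      using int_pred_mod[OF hl] p unfolding periodic_def by metis
    show ?thesis
      unfolding tau_def pred_mod_def[symmetric] chain_of_coef_def st al h using True ms ch by simp
  qed
qed

section \<open>\<open>\<Omega>\<close> and its eigenspaces as coefficient chains\<close>

definition coef_eig :: "'k::field \<Rightarrow> nat \<Rightarrow> 'k coef \<Rightarrow> bool" where
  "coef_eig lam m c \<longleftrightarrow> (\<forall>v a b e. cell m a b e \<longrightarrow> c (v-1) a b e = lam * c v a b e)"

definition coef_chains :: "nat \<Rightarrow> (nat \<Rightarrow> ('k::field) coef \<Rightarrow> bool) \<Rightarrow> nat \<Rightarrow> 'k chain set" where
  "coef_chains n P m = {chain_of_coef n m c | c. periodic n c \<and> P m c}"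

lemma Omega_eq_coef_chains:
  assumes n: "10 < n"
  shows "Omega n S124 = coef_chains n (\<lambda>_ _. True)"
proof (intro ext set_eqI)
  fix m u
  show "u \<in> Omega n S124 m \<longleftrightarrow> u \<in> coef_chains n (\<lambda>_ _. True) m"
    unfolding coef_chains_def Omega_iff_chain_of_coef[OF n] by blast
qed

lemma tau_chain_of_coef_eq_iff:
  assumes n: "10 < n" and p: "periodic n c"
  shows "tau n (chain_of_coef n m c) = (\<lambda>xs. lam * chain_of_coef n m c xs) \<longleftrightarrow> coef_eig lam m c"
  unfolding tau_chain_of_coef[OF n p] chain_of_coef_smult[symmetric]
    chain_of_coef_eq_iff[OF n periodic_shift1[OF p] periodic_smult[OF p]]
  by (simp add: agree_on_cells_def coef_eig_def)

lemma Omega_eig_eq_coef_chains: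
  assumes n: "10 < n"
  shows "Omega_eig n S124 lam = coef_chains n (coef_eig lam)"
proof (intro ext set_eqI iffI)
  fix m u
  assume "u \<in> Omega_eig n S124 lam m"
  then have u: "u \<in> Omega n S124 m" "tau n u = (\<lambda>xs. lam * u xs)" unfolding Omega_eig_def by auto
  obtain c where c: "periodic n c" "u = chain_of_coef n m c" using u(1) Omega_iff_chain_of_coef[OF n] by blast
  then show "u \<in> coef_chains n (coef_eig lam) m"
    using u(2) tau_chain_of_coef_eq_iff[OF n c(1)] unfolding coef_chains_def by blast
next
  fix m u
  assume "u \<in> coef_chains n (coef_eig lam) m"
  then obtain c where c: "periodic n c" "coef_eig lam m c" "u = chain_of_coef n m c"
    unfolding coef_chains_def by blast
  then show "u \<in> Omega_eig n S124 lam m"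
    unfolding Omega_eig_def using chain_of_coef_Omega[OF n] tau_chain_of_coef_eq_iff[OF n c(1)] by simp
qed

definition coef_cycle :: "nat \<Rightarrow> ('k::field) coef \<Rightarrow> bool" where
  "coef_cycle m c \<longleftrightarrow> m = 0 \<or> agree_on_cells (m - 1) (dcoef c) (\<lambda>v a b e. 0)"

definition coef_boundary :: "nat \<Rightarrow> (nat \<Rightarrow> ('k::field) coef \<Rightarrow> bool) \<Rightarrow> nat \<Rightarrow> 'k coef \<Rightarrow> bool" where
  "coef_boundary n P m c \<longleftrightarrow> (\<exists>w. periodic n w \<and> P (Suc m) w \<and> agree_on_cells m c (dcoef w))"

lemma bd_chain_of_coef_eq_0_iff:
  fixes c :: "('k::field) coef"
  assumes n: "10 < n" and p: "periodic n c"
  shows "bd n (chain_of_coef n m c) = (\<lambda>_. 0) \<longleftrightarrow> coef_cycle m c"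
proof (cases m)
  case 0
  have "chain_of_coef n 0 c \<in> chains n 0" using chain_of_coef_Apaths[of n 0 c] n unfolding Apaths_def by simp
  then show ?thesis using 0 bd_chains_0 unfolding coef_cycle_def by blast
next
  case (Suc m')
  have z: "periodic n (\<lambda>v a b e. 0::'k)" by (simp add: periodic_def)
  have "bd n (chain_of_coef n m c) = (\<lambda>_. 0) \<longleftrightarrow> chain_of_coef n m' (dcoef c) = chain_of_coef n m' (\<lambda>v a b e. 0)"
    using Suc bd_chain_of_coef[OF n p, of m'] chain_of_coef_zero[where 'a='k, of n m'] by simp
  also have "\<dots> \<longleftrightarrow> agree_on_cells m' (dcoef c) (\<lambda>v a b e. 0)"
    by (rule chain_of_coef_eq_iff[OF n periodic_dcoef[OF p] z])
  finally show ?thesis using Suc unfolding coef_cycle_def by simp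
qed

lemma chain_of_coef_in_boundaries_iff:
  assumes n: "10 < n" and p: "periodic n c"
  shows "chain_of_coef n m c \<in> boundaries n (coef_chains n P) m \<longleftrightarrow> coef_boundary n P m c"
proof
  assume "chain_of_coef n m c \<in> boundaries n (coef_chains n P) m"
  then obtain w where w: "periodic n w" "P (Suc m) w" "chain_of_coef n m c = bd n (chain_of_coef n (Suc m) w)"
    unfolding boundaries_def coef_chains_def by blast
  then have "agree_on_cells m c (dcoef w)"
    using chain_of_coef_eq_iff[OF n p periodic_dcoef[OF w(1)]] bd_chain_of_coef[OF n w(1)] by simp
  then show "coef_boundary n P m c" using w unfolding coef_boundary_def by blast
next
  assume "coef_boundary n P m c"
  then obtain w where w: "periodic n w" "P (Suc m) w" "agree_on_cells m c (dcoef w)"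
    unfolding coef_boundary_def by blast
  then have "chain_of_coef n m c = bd n (chain_of_coef n (Suc m) w)"
    using chain_of_coef_eq_iff[OF n p periodic_dcoef[OF w(1)]] bd_chain_of_coef[OF n w(1)] by simp
  then show "chain_of_coef n m c \<in> boundaries n (coef_chains n P) m"
    using w unfolding boundaries_def coef_chains_def by blast
qed

lemma homology_zero_coef_chains:
  assumes n: "10 < n"
    and exact: "\<And>c. periodic n c \<Longrightarrow> P m c \<Longrightarrow> coef_cycle m c \<Longrightarrow> coef_boundary n P m c"
  shows "homology_zero n (coef_chains n P) m"
  unfolding homology_zero_def
proof
  fix u assume "u \<in> cycles n (coef_chains n P) m"
  then obtain c where c: "periodic n c" "P m c" "u = chain_of_coef n m c" "bd n u = (\<lambda>_. 0)"
    unfolding cycles_def coef_chains_def by blast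
  then have "coef_cycle m c" using bd_chain_of_coef_eq_0_iff[OF n c(1)] by simp
  then have "coef_boundary n P m c" using exact c(1,2) by blast
  then show "u \<in> boundaries n (coef_chains n P) m"
    using chain_of_coef_in_boundaries_iff[OF n c(1)] c(3) by simp
qed

lemma homology_iso_field_coef_chains:
  assumes n: "10 < n" and z: "periodic n z" "P m z" "coef_cycle m z" "\<not> coef_boundary n P m z"
    and generates: "\<And>c. periodic n c \<Longrightarrow> P m c \<Longrightarrow> coef_cycle m c \<Longrightarrow>
      \<exists>k. coef_boundary n P m (\<lambda>v a b e. c v a b e - k * z v a b e)"
  shows "homology_iso_field n (coef_chains n P) m"
  unfolding homology_iso_field_def
proof (intro bexI conjI ballI)
  have "bd n (chain_of_coef n m z) = (\<lambda>_. 0)" using z(3) bd_chain_of_coef_eq_0_iff[OF n z(1)] by simp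
  moreover have "chain_of_coef n m z \<in> coef_chains n P m" using z(1,2) unfolding coef_chains_def by blast
  ultimately show "chain_of_coef n m z \<in> cycles n (coef_chains n P) m" unfolding cycles_def by simp
  show "chain_of_coef n m z \<notin> boundaries n (coef_chains n P) m"
    using z(4) chain_of_coef_in_boundaries_iff[OF n z(1)] by simp
  fix u assume "u \<in> cycles n (coef_chains n P) m"
  then obtain c where c: "periodic n c" "P m c" "u = chain_of_coef n m c" "bd n u = (\<lambda>_. 0)"
    unfolding cycles_def coef_chains_def by blast
  then have "coef_cycle m c" using bd_chain_of_coef_eq_0_iff[OF n c(1)] by simp
  then obtain k where "coef_boundary n P m (\<lambda>v a b e. c v a b e - k * z v a b e)"
    using generates c(1,2) by blast
  then have "chain_of_coef n m (\<lambda>v a b e. c v a b e - k * z v a b e) \<in> boundaries n (coef_chains n P) m"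
    using chain_of_coef_in_boundaries_iff[OF n periodic_diff[OF c(1) periodic_smult[OF z(1)]]] by blast
  then show "\<exists>k. (\<lambda>xs. u xs - k * chain_of_coef n m z xs) \<in> boundaries n (coef_chains n P) m"
    unfolding c(3) chain_of_coef_diff_smult by blast
qed

section \<open>Homology of the coefficient complex\<close>

text \<open>Triangular elimination: the boundary of the delta function at \<open>pivot_partner a b e\<close> is
  \<open>\<plusminus>1\<close> at the pivot cell \<open>(a, b, e)\<close> and vanishes at all other pivot cells of smaller or equal
  \<open>pivot_rank\<close>.\<close>

definition pivot_cell :: "nat \<Rightarrow> nat \<Rightarrow> nat \<Rightarrow> bool" where
  "pivot_cell a b e \<longleftrightarrow> odd b \<or> (e = 1 \<and> a \<le> 1)"

definition pivot_rank :: "nat \<Rightarrow> nat \<Rightarrow> nat \<Rightarrow> nat \<Rightarrow> nat" where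
  "pivot_rank m a b e = (if e = 1 \<and> odd b then a else if e = 1 then m+1+a else m+3+a)"

definition pivot_partner :: "nat \<Rightarrow> nat \<Rightarrow> nat \<Rightarrow> nat \<times> nat \<times> nat" where
  "pivot_partner a b e = (if odd b then (a+2, b-1, e) else (a, b+2, 0))"

definition pivot_sign :: "nat \<Rightarrow> nat \<Rightarrow> nat \<Rightarrow> 'k::field" where
  "pivot_sign a b e = (if odd b then (-1)^a else (-1)^(a+b))"

definition coef_delta :: "nat \<times> nat \<times> nat \<Rightarrow> (int \<Rightarrow> 'k::field) \<Rightarrow> 'k coef" where
  "coef_delta y g = (\<lambda>v a b e. if (a,b,e) = y then g v else 0)"

lemma periodic_coef_delta: "(\<forall>v. g v = g (v mod int n)) \<Longrightarrow> periodic n (coef_delta y g)"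
  unfolding periodic_def coef_delta_def by (auto intro!: ext)

lemma dcoef_coef_delta_nonzero:
  assumes "dcoef (coef_delta y g) v a b e \<noteq> 0"
  shows "y = (a+1,b,e) \<or> y = (a,b+1,e) \<or> (e = 0 \<and> y = (a,b,1)) \<or> (odd b \<and> y = (a+2,b-1,e))
     \<or> (e = 1 \<and> y = (a,b+2,0))"
  using assms unfolding dcoef_def coef_delta_def by (auto split: if_splits)

lemma dcoef_delta_pivot:
  assumes "cell m a b e" "pivot_cell a b e"
  shows "dcoef (coef_delta (pivot_partner a b e) g) v a b e = - pivot_sign a b e * g v"
  using assms unfolding dcoef_def coef_delta_def pivot_partner_def pivot_sign_def cell_def pivot_cell_def
  by auto

lemma dcoef_delta_other_pivot:
  assumes "cell m a b e" "pivot_cell a b e" "cell m a' b' e'" "pivot_cell a' b' e'"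
    "pivot_rank m a' b' e' \<le> pivot_rank m a b e" "(a',b',e') \<noteq> (a,b,e)"
  shows "dcoef (coef_delta (pivot_partner a b e) g) v a' b' e' = 0"
proof (rule ccontr)
  assume "dcoef (coef_delta (pivot_partner a b e) g) v a' b' e' \<noteq> 0"
  from dcoef_coef_delta_nonzero[OF this] assms show False
    unfolding pivot_partner_def cell_def pivot_cell_def pivot_rank_def
    apply (auto split: if_splits)
    by presburger
qed

lemma pivot_rank_inj:
  assumes "cell m a b e" "pivot_cell a b e" "cell m a' b' e'" "pivot_cell a' b' e'"
    "pivot_rank m a' b' e' = pivot_rank m a b e"
  shows "(a',b',e') = (a,b,e)"
  using assms unfolding cell_def pivot_cell_def pivot_rank_def by (auto split: if_splits)

lemma exists_dcoef_on_pivots_below_rank: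
  assumes "periodic n c"
  shows "\<exists>w. periodic n w \<and> (\<forall>v a b e. cell m a b e \<longrightarrow> pivot_cell a b e \<longrightarrow> pivot_rank m a b e < k \<longrightarrow>
            c v a b e = dcoef w v a b e)"
proof (induction k)
  case 0
  show ?case by (rule exI[of _ "\<lambda>v a b e. 0"]) (simp add: periodic_def)
next
  case (Suc k)
  then obtain w where pw: "periodic n w" and
    hw: "\<forall>v a b e. cell m a b e \<longrightarrow> pivot_cell a b e \<longrightarrow> pivot_rank m a b e < k \<longrightarrow> c v a b e = dcoef w v a b e"
    by blast
  show ?case
  proof (cases "\<exists>a b e. cell m a b e \<and> pivot_cell a b e \<and> pivot_rank m a b e = k")
    case False
    then show ?thesis using pw hw by (metis less_SucE)
  next
    case True
    then obtain a0 b0 e0 where x0: "cell m a0 b0 e0" "pivot_cell a0 b0 e0" "pivot_rank m a0 b0 e0 = k" by blast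
    define g where "g = (\<lambda>v. - pivot_sign a0 b0 e0 * (c v a0 b0 e0 - dcoef w v a0 b0 e0))"
    define w' where "w' = (\<lambda>v a b e. w v a b e + coef_delta (pivot_partner a0 b0 e0) g v a b e)"
    have pg: "\<forall>v. g v = g (v mod int n)"
      using assms periodic_dcoef[OF pw] unfolding g_def periodic_def by metis
    have pw': "periodic n w'"
      using pw periodic_coef_delta[OF pg, of "pivot_partner a0 b0 e0"] unfolding periodic_def w'_def by metis
    have sq: "pivot_sign a0 b0 e0 * pivot_sign a0 b0 e0 = (1::'a)"
      unfolding pivot_sign_def by (simp add: power_mult_distrib[symmetric])
    have "c v a b e = dcoef w' v a b e"
      if "cell m a b e" "pivot_cell a b e" "pivot_rank m a b e < Suc k" for v a b e
    proof (cases "pivot_rank m a b e = k")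
      case True
      hence "(a,b,e) = (a0,b0,e0)" using pivot_rank_inj[OF x0(1,2) that(1,2)] x0(3) by simp
      hence eq: "a = a0" "b = b0" "e = e0" by auto
      have "dcoef (coef_delta (pivot_partner a0 b0 e0) g) v a0 b0 e0 = - pivot_sign a0 b0 e0 * g v"
        using dcoef_delta_pivot[OF x0(1,2)] by simp
      also have "\<dots> = (pivot_sign a0 b0 e0 * pivot_sign a0 b0 e0) * (c v a0 b0 e0 - dcoef w v a0 b0 e0)"
        unfolding g_def by (simp add: algebra_simps)
      finally have "dcoef (coef_delta (pivot_partner a0 b0 e0) g) v a0 b0 e0 = c v a0 b0 e0 - dcoef w v a0 b0 e0"
        using sq by simp
      then show ?thesis unfolding w'_def dcoef_add eq by simp
    next
      case False
      hence lt: "pivot_rank m a b e < k" using that by simp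
      have ne: "(a,b,e) \<noteq> (a0,b0,e0)" using lt x0(3) by auto
      show ?thesis unfolding w'_def dcoef_add
        using dcoef_delta_other_pivot[OF x0(1,2) that(1,2) _ ne] lt x0(3) hw that by simp
    qed
    then show ?thesis using pw' by blast
  qed
qed

lemma exists_dcoef_on_pivots:
  assumes "periodic n c"
  shows "\<exists>w. periodic n w \<and> (\<forall>v a b e. cell m a b e \<longrightarrow> pivot_cell a b e \<longrightarrow> c v a b e = dcoef w v a b e)"
proof -
  obtain w where "periodic n w" "\<forall>v a b e. cell m a b e \<longrightarrow> pivot_cell a b e \<longrightarrow> pivot_rank m a b e < 2*m+5 \<longrightarrow>
            c v a b e = dcoef w v a b e" using exists_dcoef_on_pivots_below_rank[OF assms] by blast
  moreover have "pivot_rank m a b e < 2*m+5" if "cell m a b e" for a b e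
    using that unfolding pivot_rank_def cell_def by auto
  ultimately show ?thesis by blast
qed

lemma cycle_vanishing_e1:
  assumes m2: "m \<ge> 2"
    and U0: "\<And>v a b e. cell m a b e \<Longrightarrow> pivot_cell a b e \<Longrightarrow> c v a b e = 0"
    and cyc: "\<And>v a b e. cell (m-1) a b e \<Longrightarrow> dcoef c v a b e = (0::'k::field)"
  shows "a \<le> m - 1 \<Longrightarrow> \<forall>v. c v a (m-1-a) 1 = 0"
proof (induction a rule: less_induct)
  case (less a)
  show ?case
  proof
    fix v
    define b where "b = m - 1 - a"
    have cl: "cell m a b 1" using less.prems m2 unfolding cell_def b_def by auto
    show "c v a (m-1-a) 1 = 0"
    proof (cases "odd b \<or> a \<le> 1")
      case True
      then show ?thesis using U0[OF cl] unfolding pivot_cell_def b_def by auto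
    next
      case False
      hence ev: "even b" and a2: "a \<ge> 2" by auto
      obtain k where ak: "a = k + 2" using a2 by (metis add.commute le_Suc_ex)
      have "dcoef c v k (b+1) 1 = 0" using cyc less.prems m2 ak unfolding cell_def b_def by auto
      moreover have "c w (k+1) (b+1) 1 = 0" for w
      proof -
        have "cell m (k+1) (b+1) 1" using ak less.prems unfolding cell_def b_def by arith
        moreover have "pivot_cell (k+1) (b+1) 1" using ev unfolding pivot_cell_def by simp
        ultimately show ?thesis using U0 by blast
      qed
      moreover have "c w k (b+3) 0 = 0" for w
      proof -
        have "cell m k (b+3) 0" using ak less.prems unfolding cell_def b_def by arith
        moreover have "pivot_cell k (b+3) 0" using ev unfolding pivot_cell_def by simp
        ultimately show ?thesis using U0 by blast
      qed
      moreover have "c w k (b+2) 1 = 0" for w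
      proof -
        have "m - 1 - k = b+2" using ak less.prems unfolding b_def by arith
        then show ?thesis using less.IH[of "k"] ak less.prems by auto
      qed
      ultimately have "(-1)^k * c v (k+2) b 1 = (0::'k)"
        using ev unfolding dcoef_def by (simp add: numeral_3_eq_3)
      then show ?thesis using ak unfolding b_def by simp
    qed
  qed
qed

lemma cycle_vanishing_e0_base:
  assumes m2: "m \<ge> 2"
    and U0: "\<And>v a b e. cell m a b e \<Longrightarrow> pivot_cell a b e \<Longrightarrow> c v a b e = 0"
    and cyc: "\<And>v a b e. cell (m-1) a b e \<Longrightarrow> dcoef c v a b e = (0::'k::field)"
    and a: "a \<le> 1" and ev: "even (m - a)"
  shows "c v a (m-a) 0 = 0"
proof -
  have "m - a \<ge> 2" using ev a m2 by presburger
  then obtain j where bj: "m - a = j + 2" by (metis add.commute le_Suc_ex)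
  have "dcoef c v a j 1 = 0" using cyc bj a m2 unfolding cell_def by auto
  moreover have "c w (a+1) j 1 = 0" for w
  proof -
    have "m - 1 - (a+1) = j" "a + 1 \<le> m - 1" using bj a by arith+
    then show ?thesis using cycle_vanishing_e1[OF m2 U0 cyc, of "a+1"] by auto
  qed
  moreover have "c w a (j+1) 1 = 0" for w
  proof -
    have "m - 1 - a = j+1" "a \<le> m - 1" using bj a by arith+
    then show ?thesis using cycle_vanishing_e1[OF m2 U0 cyc, of a] by auto
  qed
  ultimately have "(-1)^(a+j) * c v a (j+2) 0 = (0::'k)"
    using ev bj unfolding dcoef_def by simp
  then show ?thesis using bj by simp
qed

lemma cycle_vanishing_e0:
  assumes m2: "m \<ge> 2"
    and U0: "\<And>v a b e. cell m a b e \<Longrightarrow> pivot_cell a b e \<Longrightarrow> c v a b e = 0"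
    and cyc: "\<And>v a b e. cell (m-1) a b e \<Longrightarrow> dcoef c v a b e = (0::'k::field)"
  shows "a \<le> m \<Longrightarrow> \<forall>v. c v a (m-a) 0 = 0"
proof (induction a rule: less_induct)
  case (less a)
  show ?case
  proof
    fix v
    define b where "b = m - a"
    have cl: "cell m a b 0" using less.prems m2 unfolding cell_def b_def by auto
    show "c v a (m-a) 0 = 0"
    proof (cases "odd b")
      case True
      then show ?thesis using U0[OF cl] unfolding pivot_cell_def b_def by auto
    next
      case False
      hence ev: "even b" by auto
      show ?thesis
      proof (cases "a \<le> 1")
        case True
        then show ?thesis using cycle_vanishing_e0_base[OF m2 U0 cyc True] ev unfolding b_def by simp
      next
        case False
        hence a2: "a \<ge> 2" by simp
        obtain k where ak: "a = k + 2" using a2 by (metis add.commute le_Suc_ex)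
        have "dcoef c v k (b+1) 0 = 0" using cyc less.prems m2 ak unfolding cell_def b_def by auto
        moreover have "c w (k+1) (b+1) 0 = 0" for w
        proof -
          have "cell m (k+1) (b+1) 0" using ak less.prems unfolding cell_def b_def by arith
          moreover have "pivot_cell (k+1) (b+1) 0" using ev unfolding pivot_cell_def by simp
          ultimately show ?thesis using U0 by blast
        qed
        moreover have "c w k (b+2) 0 = 0" for w
        proof -
          have "m - k = b+2" using ak less.prems unfolding b_def by arith
          then show ?thesis using less.IH[of "k"] ak less.prems by auto
        qed
        moreover have "c w k (b+1) 1 = 0" for w
        proof -
          have "m - 1 - k = b+1" "k \<le> m - 1" using ak less.prems unfolding b_def by arith+
          then show ?thesis using cycle_vanishing_e1[OF m2 U0 cyc, of "k"] by auto
        qed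
        ultimately have "(-1)^k * c v (k+2) b 0 = (0::'k)"
          using ev unfolding dcoef_def by simp
        then show ?thesis using ak unfolding b_def by simp
      qed
    qed
  qed
qed

lemma cycle_vanishing_on_pivots:
  assumes m2: "m \<ge> 2"
    and U0: "\<And>v a b e. cell m a b e \<Longrightarrow> pivot_cell a b e \<Longrightarrow> c v a b e = 0"
    and cyc: "\<And>v a b e. cell (m-1) a b e \<Longrightarrow> dcoef c v a b e = (0::'k::field)"
    and cl: "cell m a b e"
  shows "c v a b e = 0"
proof (cases "e = 0")
  case True
  then show ?thesis using cycle_vanishing_e0[OF m2 U0 cyc, of a] cl unfolding cell_def by auto
next
  case False
  then have "e = 1" "m - 1 - a = b" "a \<le> m - 1" using cl unfolding cell_def by auto
  then show ?thesis using cycle_vanishing_e1[OF m2 U0 cyc, of a] by auto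
qed

lemma coef_exact_ge2:
  assumes m2: "2 \<le> m" and p: "periodic n c" and cyc: "agree_on_cells (m-1) (dcoef c) (\<lambda>v a b e. 0)"
  shows "\<exists>w. periodic n w \<and> agree_on_cells m c (dcoef w)"
proof -
  obtain w where pw: "periodic n w" and hw: "\<forall>v a b e. cell m a b e \<longrightarrow> pivot_cell a b e \<longrightarrow> c v a b e = dcoef w v a b e"
    using exists_dcoef_on_pivots[OF p] by blast
  define c' where "c' = (\<lambda>v a b e. c v a b e - dcoef w v a b e)"
  have U0: "c' v a b e = 0" if "cell m a b e" "pivot_cell a b e" for v a b e
    using hw that unfolding c'_def by simp
  have cy: "dcoef c' v a b e = 0" if "cell (m-1) a b e" for v a b e
    using cyc that dcoef_dcoef[of w v a b e] unfolding c'_def dcoef_diff agree_on_cells_def by simp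
  have "c' v a b e = 0" if "cell m a b e" for v a b e
    by (rule cycle_vanishing_on_pivots[OF m2 U0 cy that])
  then have "agree_on_cells m c (dcoef w)" unfolding agree_on_cells_def c'_def by simp
  then show ?thesis using pw by blast
qed

lemma sum_periodic_shift:
  assumes p: "\<forall>v. f v = f (v mod int n)" and n: "0 < n"
  shows "(\<Sum>k<n. f (int k + s)) = (\<Sum>k<n. (f (int k) :: 'k::field))"
proof -
  define h where "h = (\<lambda>k::nat. nat ((int k + s) mod int n))"
  have hl: "h ` {..<n} \<subseteq> {..<n}" unfolding h_def using n
    by (auto simp: nat_less_iff)
  have inj: "inj_on h {..<n}"
  proof (rule inj_onI)
    fix k k' assume kk: "k \<in> {..<n}" "k' \<in> {..<n}" "h k = h k'"
    moreover have "0 \<le> (int k + s) mod int n" "0 \<le> (int k' + s) mod int n" using n by simp_all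
    ultimately have "(int k + s) mod int n = (int k' + s) mod int n" unfolding h_def
      using eq_nat_nat_iff by blast
    then have "int n dvd (int k + s) - (int k' + s)" by (simp add: mod_eq_dvd_iff)
    then have "int n dvd int k - int k'" by simp
    moreover have "\<bar>int k - int k'\<bar> < int n" using kk by auto
    ultimately have "int k - int k' = 0" using zdvd_abs_less_imp_0 by blast
    then show "k = k'" by simp
  qed
  have im: "h ` {..<n} = {..<n}" using endo_inj_surj[OF _ hl inj] by simp
  have "(\<Sum>k<n. f (int k + s)) = (\<Sum>k<n. f (int (h k)))"
  proof (rule sum.cong[OF refl])
    fix k assume "k \<in> {..<n}"
    have "int (h k) = (int k + s) mod int n" unfolding h_def using n by simp
    then show "f (int k + s) = f (int (h k))" using p by metis
  qed
  also have "\<dots> = (\<Sum>j\<in>h ` {..<n}. f (int j))" by (rule sum.reindex[OF inj, symmetric, unfolded comp_def])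
  also have "\<dots> = (\<Sum>k<n. f (int k))" using im by simp
  finally show ?thesis .
qed

lemma period_sum_shift:
  assumes p: "periodic n w" and n: "0 < n"
  shows "(\<Sum>k<n. w (int k - s) a b e) = (\<Sum>k<n. (w (int k) a b e :: 'k::field))"
proof -
  have "\<forall>v. w v a b e = w (v mod int n) a b e" using p unfolding periodic_def by metis
  from sum_periodic_shift[OF this n, of "-s"] show ?thesis by simp
qed

lemma period_sum_dcoef_deg0:
  assumes p: "periodic n w" and n: "0 < n"
  shows "(\<Sum>k<n. dcoef w (int k) 0 0 0) = (0::'k::field)"
  unfolding dcoef_def
  by (simp add: sum.distrib sum_subtractf period_sum_shift[OF p n])

lemma period_sum_dcoef_deg1:
  assumes p: "periodic n w" and n: "0 < n"
  shows "(\<Sum>k<n. dcoef w (int k) 1 0 0 + 2 * dcoef w (int k) 0 1 0 + 4 * dcoef w (int k) 0 0 1) = (0::'k::field)"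
proof -
  have d1: "dcoef w v 1 0 0 = w (v-1) 2 0 0 + w v 2 0 0 - w (v-2) 1 1 0 + w v 1 1 0 - w (v-4) 1 0 1 + w v 1 0 1" for v
    by (simp add: dcoef_def numeral_2_eq_2)
  have d2: "dcoef w v 0 1 0 = w (v-1) 1 1 0 - w v 1 1 0 + w (v-2) 0 2 0 + w v 0 2 0 - w (v-4) 0 1 1 + w v 0 1 1 - w v 2 0 0" for v
    by (simp add: dcoef_def numeral_2_eq_2)
  have d3: "dcoef w v 0 0 1 = w (v-1) 1 0 1 - w v 1 0 1 + w (v-2) 0 1 1 - w v 0 1 1 - w v 0 2 0" for v
    by (simp add: dcoef_def numeral_2_eq_2)
  show ?thesis unfolding d1 d2 d3
    by (simp only: sum.distrib sum_subtractf sum_distrib_left[symmetric] distrib_left right_diff_distrib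
        period_sum_shift[OF p n]) (simp add: algebra_simps)
qed

text \<open>The primitive \<open>w\<close> is a running sum of \<open>c\<close> along the \<open>1\<close>-steps; it closes up around
  \<open>Z\<^sub>n\<close> because the period sum of \<open>c\<close> vanishes.\<close>

lemma coef_exact_deg0:
  assumes n: "0 < n" and p: "periodic n c" and s: "(\<Sum>k<n. c (int k) 0 0 0) = 0"
  shows "\<exists>w. periodic n w \<and> agree_on_cells 0 c (dcoef w)"
proof -
  define g where "g = (\<lambda>r::nat. - (\<Sum>k\<le>r. c (int k) 0 0 0))"
  define w :: "'a coef" where "w = (\<lambda>v a b e. if a = 1 \<and> b = 0 \<and> e = 0 then g (nat (v mod int n)) else 0)"
  have pw: "periodic n w" unfolding periodic_def w_def by (simp add: fun_eq_iff)
  have "c v 0 0 0 = dcoef w v 0 0 0" for v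
  proof -
    have D: "dcoef w v 0 0 0 = w (v-1) 1 0 0 - w v 1 0 0" unfolding dcoef_def w_def by simp
    define r where "r = nat (v mod int n)"
    have rl: "r < n" unfolding r_def using n by (simp add: nat_less_iff)
    have rv: "int r = v mod int n" unfolding r_def using n by simp
    have cv: "c v 0 0 0 = c (int r) 0 0 0" using p rv unfolding periodic_def by metis
    have prev: "nat ((v - 1) mod int n) = (if r = 0 then n - 1 else r - 1)"
    proof -
      have "(v - 1) mod int n = (int r - 1) mod int n" using rv by (simp add: mod_diff_left_eq)
      then show ?thesis using rl n by (cases "r = 0") (simp_all add: zmod_minus1 of_nat_diff)
    qed
    show ?thesis
    proof (cases "r = 0")
      case True
      have "{..n-1} = {..<n}" using n by auto
      then have "w (v-1) 1 0 0 = 0" using s True prev unfolding w_def g_def by simp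
      moreover have "w v 1 0 0 = - c 0 0 0 0" unfolding w_def g_def r_def[symmetric] using True by simp
      ultimately show ?thesis unfolding D cv using True by simp
    next
      case False
      then obtain r' where r': "r = Suc r'" by (cases r) auto
      have "w (v-1) 1 0 0 = g r'" using prev r' unfolding w_def by simp
      moreover have "w v 1 0 0 = g r" unfolding w_def r_def by simp
      ultimately show ?thesis unfolding D cv g_def r' by simp
    qed
  qed
  then show ?thesis using pw unfolding agree_on_cells_def cell_def by auto
qed

definition one_coef :: "('k::field) coef" where
  "one_coef = (\<lambda>v a b e. 1)"

lemma coef_deg0_decomp:
  fixes c :: "('k::field_char_0) coef"
  assumes n: "0 < n" and p: "periodic n c"
  shows "\<exists>w. periodic n w \<and> agree_on_cells 0
    (\<lambda>v a b e. c v a b e - (\<Sum>k<n. c (int k) 0 0 0) / of_nat n * one_coef v a b e) (dcoef w)"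
proof (rule coef_exact_deg0[OF n])
  show "periodic n (\<lambda>v a b e. c v a b e - (\<Sum>k<n. c (int k) 0 0 0) / of_nat n * one_coef v a b e)"
    using p unfolding periodic_def one_coef_def by metis
  show "(\<Sum>k<n. c (int k) 0 0 0 - (\<Sum>k<n. c (int k) 0 0 0) / of_nat n * one_coef (int k) 0 0 0) = 0"
    using n by (simp add: one_coef_def sum_subtractf)
qed

lemma one_coef_not_dcoef:
  assumes n: "0 < n" and pw: "periodic n w"
  shows "\<not> agree_on_cells 0 (one_coef :: ('k::field_char_0) coef) (dcoef w)"
proof
  assume "agree_on_cells 0 (one_coef :: 'k coef) (dcoef w)"
  then have "(\<Sum>k<n. one_coef (int k) 0 0 0) = (\<Sum>k<n. dcoef w (int k) 0 0 0 :: 'k)"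
    unfolding agree_on_cells_def cell_def by simp
  then show False using period_sum_dcoef_deg0[OF pw n] n by (simp add: one_coef_def)
qed

lemma shift_invariant_const:
  assumes p: "\<forall>v. f v = f (v mod int n)" and s: "\<forall>v. f (v - 1) = f v" and n: "0 < n"
  shows "f v = f 0"
proof -
  have "f (int k) = f 0" for k
  proof (induction k)
    case 0 then show ?case by simp
  next
    case (Suc k)
    have "f (int (Suc k)) = f (int (Suc k) - 1)" using s by metis
    then show ?case using Suc by simp
  qed
  moreover have "v mod int n = int (nat (v mod int n))" using n by simp
  ultimately show ?thesis using p by metis
qed

definition edge1_coef :: "('k::field) coef" where
  "edge1_coef v a b e = (if a = 1 \<and> b = 0 \<and> e = 0 then 1 else 0)"

lemma periodic_edge1_coef: "periodic n edge1_coef" unfolding periodic_def edge1_coef_def by simp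

lemma coef_deg1_decomp:
  assumes n: "0 < n" and p: "periodic n c" and cycle: "coef_cycle 1 c"
  shows "\<exists>w k. periodic n w \<and> agree_on_cells 1 (\<lambda>v a b e. c v a b e - k * edge1_coef v a b e) (dcoef w)"
proof -
  have cyc: "\<forall>v. dcoef c v 0 0 0 = 0" using cycle unfolding coef_cycle_def agree_on_cells_def cell_def by simp
  obtain w where pw: "periodic n w" and hw: "\<forall>v a b e. cell 1 a b e \<longrightarrow> pivot_cell a b e \<longrightarrow> c v a b e = dcoef w v a b e"
    using exists_dcoef_on_pivots[OF p] by blast
  define c' where "c' = (\<lambda>v a b e. c v a b e - dcoef w v a b e)"
  have pc': "periodic n c'" unfolding c'_def by (rule periodic_diff[OF p periodic_dcoef[OF pw]])
  have z010: "c' v 0 1 0 = 0" for v using hw unfolding c'_def cell_def pivot_cell_def by simp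
  have z001: "c' v 0 0 1 = 0" for v using hw unfolding c'_def cell_def pivot_cell_def by simp
  have cy: "dcoef c' v 0 0 0 = 0" for v
    using cyc dcoef_dcoef[of w v 0 0 0] unfolding c'_def dcoef_diff by simp
  have sh: "c' (v - 1) 1 0 0 = c' v 1 0 0" for v
    using cy[of v] z010 z001 unfolding dcoef_def by simp
  define f where "f = (\<lambda>v. c' v 1 0 0)"
  have pf: "\<forall>v. f v = f (v mod int n)" using pc' unfolding periodic_def f_def by metis
  have const: "f v = f 0" for v by (rule shift_invariant_const[OF pf _ n]) (use sh f_def in auto)
  have "agree_on_cells 1 c (\<lambda>v a b e. f 0 * edge1_coef v a b e + dcoef w v a b e)"
    unfolding agree_on_cells_def
  proof (intro allI impI)
    fix v a b e assume cl: "cell 1 a b e"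
    then consider "a = 1 \<and> b = 0 \<and> e = 0" | "a = 0 \<and> b = 1 \<and> e = 0" | "a = 0 \<and> b = 0 \<and> e = 1"
      unfolding cell_def by arith
    then show "c v a b e = f 0 * edge1_coef v a b e + dcoef w v a b e"
    proof cases
      case 1 then show ?thesis using const[of v] unfolding f_def c'_def edge1_coef_def by (simp add: algebra_simps)
    next
      case 2 then show ?thesis using z010[of v] unfolding c'_def edge1_coef_def by simp
    next
      case 3 then show ?thesis using z001[of v] unfolding c'_def edge1_coef_def by simp
    qed
  qed
  then have "agree_on_cells 1 (\<lambda>v a b e. c v a b e - f 0 * edge1_coef v a b e) (dcoef w)"
    unfolding agree_on_cells_def by simp
  then show ?thesis using pw by blast
qed

lemma coef_cycle_edge1_coef: "coef_cycle 1 edge1_coef"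
  unfolding coef_cycle_def agree_on_cells_def cell_def by (simp add: dcoef_def edge1_coef_def)

lemma edge1_coef_not_dcoef:
  assumes n: "0 < n" and pw: "periodic n w"
  shows "\<not> agree_on_cells 1 (edge1_coef :: ('k::field_char_0) coef) (dcoef w)"
proof
  assume ce: "agree_on_cells 1 (edge1_coef :: 'k coef) (dcoef w)"
  have eq: "edge1_coef v a b e = dcoef w v a b e" if "cell 1 a b e" for v a b e
    using ce that unfolding agree_on_cells_def by blast
  have "dcoef w (int k) 1 0 0 = 1" "dcoef w (int k) 0 1 0 = 0" "dcoef w (int k) 0 0 1 = 0" for k
    using eq[of 1 0 0 "int k"] eq[of 0 1 0 "int k"] eq[of 0 0 1 "int k"] by (simp_all add: cell_def edge1_coef_def)
  then show False using period_sum_dcoef_deg1[OF pw n] n by simp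
qed

definition eig_average :: "'k::field \<Rightarrow> nat \<Rightarrow> 'k coef \<Rightarrow> 'k coef" where
  "eig_average lam n w v a b e = (\<Sum>k<n. lam^k * w (v + int k) a b e)"

lemma periodic_eig_average: "periodic n w \<Longrightarrow> periodic n (eig_average lam n w)"
  unfolding periodic_def eig_average_def
proof (intro allI ext)
  fix v a b e assume p: "\<forall>v. w v = w (v mod int n)"
  have "w (v mod int n + int k) = w (v + int k)" for k
    using p by (metis mod_add_left_eq)
  then show "(\<Sum>k<n. lam ^ k * w (v + int k) a b e) = (\<Sum>k<n. lam ^ k * w (v mod int n + int k) a b e)"
    by simp
qed

lemma eig_average_shift:
  assumes p: "periodic n w" and l: "lam^n = 1" and n: "0 < n"
  shows "eig_average lam n w (v - 1) a b e = lam * eig_average lam n w v a b e"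
proof -
  obtain n' where n': "n = Suc n'" using n by (cases n) auto
  have wn: "w (v - 1) = w (v + int n')"
  proof -
    have "w (v - 1) = w ((v - 1) mod int n)" using p unfolding periodic_def by metis
    also have "(v - 1) mod int n = (v + int n') mod int n"
    proof -
      have e: "v + int n' = (v - 1) + int n" using n' by simp
      show ?thesis unfolding e by (rule mod_add_self2[symmetric])
    qed
    also have "w ((v + int n') mod int n) = w (v + int n')" using p unfolding periodic_def by metis
    finally show ?thesis .
  qed
  have "eig_average lam n w (v - 1) a b e = (\<Sum>k<Suc n'. lam^k * w (v - 1 + int k) a b e)"
    unfolding eig_average_def n' ..
  also have "\<dots> = w (v - 1) a b e + (\<Sum>k<n'. lam^(Suc k) * w (v + int k) a b e)"
    by (subst sum.lessThan_Suc_shift) simp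
  also have "\<dots> = (\<Sum>k<n'. lam^(Suc k) * w (v + int k) a b e) + lam^(Suc n') * w (v + int n') a b e"
    using wn l n' by simp
  also have "\<dots> = (\<Sum>k<Suc n'. lam^(Suc k) * w (v + int k) a b e)" by simp
  also have "\<dots> = lam * eig_average lam n w v a b e"
    unfolding eig_average_def n' by (simp add: sum_distrib_left mult.assoc distrib_left)
  finally show ?thesis .
qed

lemma dcoef_zero: "dcoef (\<lambda>v a b e. 0) = (\<lambda>v a b e. (0::'k::field))"
  by (intro ext) (simp add: dcoef_def)

lemma dcoef_sum: "dcoef (\<lambda>v a b e. \<Sum>k<(N::nat). f k v a b e) = (\<lambda>v a b e. \<Sum>k<N. dcoef (f k) v a b e)"
proof (induction N)
  case 0 then show ?case by (simp add: dcoef_zero)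
next
  case (Suc N)
  have "dcoef (\<lambda>v a b e. \<Sum>k<Suc N. f k v a b e) = dcoef (\<lambda>v a b e. (\<Sum>k<N. f k v a b e) + f N v a b e)"
    by simp
  also have "\<dots> = (\<lambda>v a b e. dcoef (\<lambda>v a b e. \<Sum>k<N. f k v a b e) v a b e + dcoef (f N) v a b e)"
    by (rule dcoef_add)
  also have "\<dots> = (\<lambda>v a b e. \<Sum>k<Suc N. dcoef (f k) v a b e)" unfolding Suc by simp
  finally show ?case .
qed

lemma dcoef_translate: "dcoef (\<lambda>v. f (v + t)) v a b e = dcoef f (v + t) a b e"
proof -
  have e: "v - 1 + t = v + t - 1" "v - 2 + t = v + t - 2" "v - 4 + t = v + t - 4" by simp_all
  show ?thesis by (simp only: dcoef_def e)
qed

lemma dcoef_eig_average: "dcoef (eig_average lam n w) = eig_average lam n (dcoef w)"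
proof (intro ext)
  fix v a b e
  have "dcoef (eig_average lam n w) = dcoef (\<lambda>v a b e. \<Sum>k<n. lam^k * w (v + int k) a b e)"
    unfolding eig_average_def ..
  also have "\<dots> = (\<lambda>v a b e. \<Sum>k<n. dcoef (\<lambda>v a b e. lam^k * w (v + int k) a b e) v a b e)"
    by (rule dcoef_sum)
  finally have "dcoef (eig_average lam n w) v a b e = (\<Sum>k<n. dcoef (\<lambda>v a b e. lam^k * w (v + int k) a b e) v a b e)"
    by simp
  also have "\<dots> = (\<Sum>k<n. lam^k * dcoef w (v + int k) a b e)"
  proof (rule sum.cong[OF refl])
    fix k
    have "dcoef (\<lambda>v a b e. lam^k * w (v + int k) a b e) v a b e = lam^k * dcoef (\<lambda>v. w (v + int k)) v a b e"
      using dcoef_smult[of "lam^k" "\<lambda>v. w (v + int k)"] by metis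
    also have "\<dots> = lam^k * dcoef w (v + int k) a b e" by (simp only: dcoef_translate)
    finally show "dcoef (\<lambda>v a b e. lam^k * w (v + int k) a b e) v a b e = lam^k * dcoef w (v + int k) a b e" .
  qed
  also have "\<dots> = eig_average lam n (dcoef w) v a b e" unfolding eig_average_def ..
  finally show "dcoef (eig_average lam n w) v a b e = eig_average lam n (dcoef w) v a b e" .
qed

lemma coef_eig_power:
  assumes e: "coef_eig lam m c" and cl: "cell m a b e"
  shows "lam^k * c (v + int k) a b e = c v a b e"
proof (induction k)
  case 0 then show ?case by simp
next
  case (Suc k)
  have "c (v + int (Suc k) - 1) a b e = lam * c (v + int (Suc k)) a b e"
    using e cl unfolding coef_eig_def by blast
  then have h: "c (v + int k) a b e = lam * c (v + int (Suc k)) a b e" by simp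
  have "lam^(Suc k) * c (v + int (Suc k)) a b e = lam^k * (lam * c (v + int (Suc k)) a b e)"
    by (simp only: power_Suc mult.assoc mult.commute[of lam])
  also have "\<dots> = lam^k * c (v + int k) a b e" using h by simp
  also have "\<dots> = c v a b e" using Suc.IH .
  finally show ?case .
qed

lemma eig_average_coef_eig:
  assumes e: "coef_eig lam m c" and cl: "cell m a b e"
  shows "eig_average lam n c v a b e = of_nat n * c v a b e"
  unfolding eig_average_def using coef_eig_power[OF e cl] by simp

lemma agree_on_cells_eig_average: "agree_on_cells m c d \<Longrightarrow> agree_on_cells m (eig_average lam n c) (eig_average lam n d)"
  unfolding agree_on_cells_def eig_average_def by simp

lemma coef_boundary_eig_of_average:
  fixes c w :: "('k::field_char_0) coef"
  assumes n: "0 < n" and l: "lam^n = 1" and pw: "periodic n w"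
    and avg: "\<And>v a b e. cell m a b e \<Longrightarrow> of_nat n * c v a b e = eig_average lam n (dcoef w) v a b e"
  shows "coef_boundary n (coef_eig lam) m c"
proof -
  define w' where "w' = (\<lambda>v a b e. (1 / of_nat n) * eig_average lam n w v a b e)"
  have p': "periodic n w'" unfolding w'_def by (rule periodic_smult[OF periodic_eig_average[OF pw]])
  have e': "coef_eig lam (Suc m) w'" unfolding coef_eig_def w'_def using eig_average_shift[OF pw l n] by simp
  have "c v a b e = dcoef w' v a b e" if cl: "cell m a b e" for v a b e
  proof -
    have "dcoef w' v a b e = (1 / of_nat n) * eig_average lam n (dcoef w) v a b e"
      unfolding w'_def dcoef_smult dcoef_eig_average ..
    also have "\<dots> = (1 / of_nat n) * (of_nat n * c v a b e)" using avg[OF cl] by simp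
    also have "\<dots> = c v a b e" using n by simp
    finally show ?thesis by simp
  qed
  then show ?thesis using p' e' unfolding coef_boundary_def agree_on_cells_def by blast
qed

lemma coef_boundary_eig:
  fixes c w :: "('k::field_char_0) coef"
  assumes n: "0 < n" and l: "lam^n = 1" and ec: "coef_eig lam m c" and pw: "periodic n w"
    and ce: "agree_on_cells m c (dcoef w)"
  shows "coef_boundary n (coef_eig lam) m c"
proof (rule coef_boundary_eig_of_average[OF n l pw])
  fix v a b e assume cl: "cell m a b e"
  have "eig_average lam n c v a b e = eig_average lam n (dcoef w) v a b e"
    using agree_on_cells_eig_average[OF ce] cl unfolding agree_on_cells_def by blast
  then show "of_nat n * c v a b e = eig_average lam n (dcoef w) v a b e" using eig_average_coef_eig[OF ec cl] by simp
qed

lemma coef_eig_diff_smult: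
  "coef_eig lam m c \<Longrightarrow> coef_eig lam m z \<Longrightarrow> coef_eig lam m (\<lambda>v a b e. c v a b e - k * z v a b e)"
  unfolding coef_eig_def by (simp add: algebra_simps)

lemma coef_eig_sum_eq_0:
  fixes c :: "('k::field) coef"
  assumes n: "0 < n" and p: "periodic n c" and ec: "coef_eig lam m c" and l: "lam \<noteq> 1" and cl: "cell m a b e"
  shows "(\<Sum>k<n. c (int k) a b e) = 0"
proof -
  have "(\<Sum>k<n. c (int k) a b e) = (\<Sum>k<n. c (int k - 1) a b e)" by (rule period_sum_shift[OF p n, symmetric])
  also have "\<dots> = lam * (\<Sum>k<n. c (int k) a b e)"
    using ec cl unfolding coef_eig_def by (simp add: sum_distrib_left)
  finally show ?thesis using l by (metis lambda_one mult_cancel_right)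
qed

section \<open>Homology of \<open>\<Omega>\<close> and of its eigenspaces\<close>

lemma coef_boundary_ge2:
  assumes m: "2 \<le> m" and p: "periodic n c" and cy: "coef_cycle m c"
  obtains w where "periodic n w" "agree_on_cells m c (dcoef w)"
proof -
  have "agree_on_cells (m-1) (dcoef c) (\<lambda>v a b e. 0)" using cy m unfolding coef_cycle_def by simp
  then show ?thesis using coef_exact_ge2[OF m p] that by blast
qed

lemma homology_zero_Omega_ge2:
  assumes n: "10 < n" and m: "2 \<le> m"
  shows "homology_zero n (Omega n S124 :: nat \<Rightarrow> ('k::field) chain set) m"
  unfolding Omega_eq_coef_chains[OF n]
proof (rule homology_zero_coef_chains[OF n])
  fix c :: "'k coef" assume "periodic n c" "coef_cycle m c"
  then obtain w where "periodic n w" "agree_on_cells m c (dcoef w)" by (rule coef_boundary_ge2[OF m])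
  then show "coef_boundary n (\<lambda>_ _. True) m c" unfolding coef_boundary_def by blast
qed

lemma homology_zero_Omega_eig_ge2:
  assumes n: "10 < n" and m: "2 \<le> m" and l: "lam^n = 1"
  shows "homology_zero n (Omega_eig n S124 (lam::'k::field_char_0)) m"
  unfolding Omega_eig_eq_coef_chains[OF n]
proof (rule homology_zero_coef_chains[OF n])
  fix c :: "'k coef" assume "periodic n c" "coef_eig lam m c" "coef_cycle m c"
  moreover from this obtain w where "periodic n w" "agree_on_cells m c (dcoef w)" by (metis coef_boundary_ge2[OF m])
  ultimately show "coef_boundary n (coef_eig lam) m c" using n by (intro coef_boundary_eig[OF _ l]) simp_all
qed

lemma homology_iso_field_Omega_0:
  assumes n: "10 < n"
  shows "homology_iso_field n (Omega n S124 :: nat \<Rightarrow> ('k::field_char_0) chain set) 0"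
  unfolding Omega_eq_coef_chains[OF n]
proof (rule homology_iso_field_coef_chains[OF n])
  have n0: "0 < n" using n by simp
  show "periodic n one_coef" "coef_cycle 0 one_coef" by (simp_all add: periodic_def one_coef_def coef_cycle_def)
  show "\<not> coef_boundary n (\<lambda>_ _. True) 0 (one_coef :: 'k coef)"
    unfolding coef_boundary_def using one_coef_not_dcoef[OF n0] by blast
  fix c :: "'k coef" assume "periodic n c"
  then obtain w where "periodic n w"
    "agree_on_cells 0 (\<lambda>v a b e. c v a b e - (\<Sum>k<n. c (int k) 0 0 0) / of_nat n * one_coef v a b e) (dcoef w)"
    using coef_deg0_decomp[OF n0] by blast
  then show "\<exists>k. coef_boundary n (\<lambda>_ _. True) 0 (\<lambda>v a b e. c v a b e - k * one_coef v a b e)"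
    unfolding coef_boundary_def by blast
qed simp

lemma homology_iso_field_Omega_1:
  assumes n: "10 < n"
  shows "homology_iso_field n (Omega n S124 :: nat \<Rightarrow> ('k::field_char_0) chain set) 1"
  unfolding Omega_eq_coef_chains[OF n]
proof (rule homology_iso_field_coef_chains[OF n periodic_edge1_coef _ coef_cycle_edge1_coef])
  have n0: "0 < n" using n by simp
  show "\<not> coef_boundary n (\<lambda>_ _. True) 1 (edge1_coef :: 'k coef)"
    unfolding coef_boundary_def using edge1_coef_not_dcoef[OF n0] by blast
  fix c :: "'k coef" assume "periodic n c" "coef_cycle 1 c"
  then obtain w k where "periodic n w" "agree_on_cells 1 (\<lambda>v a b e. c v a b e - k * edge1_coef v a b e) (dcoef w)"
    using coef_deg1_decomp[OF n0] by blast
  then show "\<exists>k. coef_boundary n (\<lambda>_ _. True) 1 (\<lambda>v a b e. c v a b e - k * edge1_coef v a b e)"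
    unfolding coef_boundary_def by blast
qed simp

lemma homology_iso_field_Omega_eig_one_0:
  assumes n: "10 < n"
  shows "homology_iso_field n (Omega_eig n S124 (1::'k::field_char_0)) 0"
  unfolding Omega_eig_eq_coef_chains[OF n]
proof (rule homology_iso_field_coef_chains[OF n])
  have n0: "0 < n" using n by simp
  show "periodic n one_coef" "coef_eig 1 0 one_coef" "coef_cycle 0 one_coef"
    by (simp_all add: periodic_def one_coef_def coef_eig_def coef_cycle_def)
  show "\<not> coef_boundary n (coef_eig 1) 0 (one_coef :: 'k coef)"
    unfolding coef_boundary_def using one_coef_not_dcoef[OF n0] by blast
  fix c :: "'k coef" assume p: "periodic n c" and ec: "coef_eig 1 0 c"
  define k where "k = (\<Sum>k<n. c (int k) 0 0 0) / of_nat n"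
  obtain w where w: "periodic n w" "agree_on_cells 0 (\<lambda>v a b e. c v a b e - k * one_coef v a b e) (dcoef w)"
    using coef_deg0_decomp[OF n0 p] unfolding k_def by blast
  have "coef_eig 1 0 (\<lambda>v a b e. c v a b e - k * one_coef v a b e)"
    by (rule coef_eig_diff_smult[OF ec]) (simp add: coef_eig_def one_coef_def)
  then have "coef_boundary n (coef_eig 1) 0 (\<lambda>v a b e. c v a b e - k * one_coef v a b e)"
    by (rule coef_boundary_eig[OF n0 power_one _ w(1,2)])
  then show "\<exists>k. coef_boundary n (coef_eig 1) 0 (\<lambda>v a b e. c v a b e - k * one_coef v a b e)" by blast
qed

lemma homology_iso_field_Omega_eig_one_1:
  assumes n: "10 < n"
  shows "homology_iso_field n (Omega_eig n S124 (1::'k::field_char_0)) 1"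
  unfolding Omega_eig_eq_coef_chains[OF n]
proof (rule homology_iso_field_coef_chains[OF n periodic_edge1_coef _ coef_cycle_edge1_coef])
  have n0: "0 < n" using n by simp
  show "coef_eig 1 1 edge1_coef" by (simp add: coef_eig_def edge1_coef_def)
  show "\<not> coef_boundary n (coef_eig 1) 1 (edge1_coef :: 'k coef)"
    unfolding coef_boundary_def using edge1_coef_not_dcoef[OF n0] by blast
  fix c :: "'k coef" assume p: "periodic n c" and ec: "coef_eig 1 1 c" and cy: "coef_cycle 1 c"
  obtain w k where w: "periodic n w" "agree_on_cells 1 (\<lambda>v a b e. c v a b e - k * edge1_coef v a b e) (dcoef w)"
    using coef_deg1_decomp[OF n0 p cy] by blast
  have "coef_eig 1 1 (\<lambda>v a b e. c v a b e - k * edge1_coef v a b e)"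
    by (rule coef_eig_diff_smult[OF ec]) (simp add: coef_eig_def edge1_coef_def)
  then have "coef_boundary n (coef_eig 1) 1 (\<lambda>v a b e. c v a b e - k * edge1_coef v a b e)"
    by (rule coef_boundary_eig[OF n0 power_one _ w(1,2)])
  then show "\<exists>k. coef_boundary n (coef_eig 1) 1 (\<lambda>v a b e. c v a b e - k * edge1_coef v a b e)" by blast
qed

lemma homology_zero_Omega_eig_0:
  assumes n: "10 < n" and l: "lam^n = 1" "lam \<noteq> (1::'k::field_char_0)"
  shows "homology_zero n (Omega_eig n S124 lam) 0"
  unfolding Omega_eig_eq_coef_chains[OF n]
proof (rule homology_zero_coef_chains[OF n])
  have n0: "0 < n" using n by simp
  fix c :: "'k coef" assume p: "periodic n c" and ec: "coef_eig lam 0 c"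
  have "(\<Sum>k<n. c (int k) 0 0 0) = 0" by (rule coef_eig_sum_eq_0[OF n0 p ec l(2)]) (simp add: cell_def)
  then obtain w where "periodic n w" "agree_on_cells 0 c (dcoef w)" using coef_exact_deg0[OF n0 p] by blast
  then show "coef_boundary n (coef_eig lam) 0 c" by (rule coef_boundary_eig[OF n0 l(1) ec])
qed

lemma homology_zero_Omega_eig_1:
  assumes n: "10 < n" and l: "lam^n = 1" "lam \<noteq> (1::'k::field_char_0)"
  shows "homology_zero n (Omega_eig n S124 lam) 1"
  unfolding Omega_eig_eq_coef_chains[OF n]
proof (rule homology_zero_coef_chains[OF n])
  have n0: "0 < n" using n by simp
  fix c :: "'k coef" assume p: "periodic n c" and ec: "coef_eig lam 1 c" and cy: "coef_cycle 1 c"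
  obtain w k where w: "periodic n w" "agree_on_cells 1 (\<lambda>v a b e. c v a b e - k * edge1_coef v a b e) (dcoef w)"
    using coef_deg1_decomp[OF n0 p cy] by blast
  show "coef_boundary n (coef_eig lam) 1 c"
  proof (rule coef_boundary_eig_of_average[OF n0 l(1) w(1)])
    fix v a b e assume cl: "cell 1 a b e"
    have "of_nat n * c v a b e = eig_average lam n c v a b e" using eig_average_coef_eig[OF ec cl] by simp
    also have "\<dots> = (\<Sum>j<n. lam^j * (k * edge1_coef (v + int j) a b e + dcoef w (v + int j) a b e))"
      unfolding eig_average_def using w(2) cl unfolding agree_on_cells_def by (simp add: algebra_simps)
    also have "\<dots> = k * edge1_coef 0 a b e * (\<Sum>j<n. lam^j) + eig_average lam n (dcoef w) v a b e"
      unfolding eig_average_def edge1_coef_def by (simp add: algebra_simps sum.distrib sum_distrib_left)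
    also have "(\<Sum>j<n. lam^j) = 0" using l by (simp add: sum_gp_strict)
    finally show "of_nat n * c v a b e = eig_average lam n (dcoef w) v a b e" by simp
  qed
qed

theorem mainTheorem15:
  fixes n :: nat
  assumes "n > 10"
    and roots: "\<exists>\<omega>::'k::field_char_0. \<omega> ^ n = 1 \<and> (\<forall>k. 0 < k \<and> k < n \<longrightarrow> \<omega> ^ k \<noteq> 1)"
  shows "(\<forall>lam::'k. lam ^ n = 1 \<longrightarrow>
            (if lam = 1
             then homology_iso_field n (Omega_eig n {1,2,4} lam) 0
                \<and> homology_iso_field n (Omega_eig n {1,2,4} lam) 1
             else homology_zero n (Omega_eig n {1,2,4} lam) 0
                \<and> homology_zero n (Omega_eig n {1,2,4} lam) 1)
            \<and> (\<forall>m\<ge>2. homology_zero n (Omega_eig n {1,2,4} lam) m))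
       \<and> homology_iso_field n (Omega n {1,2,4} :: nat \<Rightarrow> 'k chain set) 0
       \<and> homology_iso_field n (Omega n {1,2,4} :: nat \<Rightarrow> 'k chain set) 1
       \<and> (\<forall>m\<ge>2. homology_zero n (Omega n {1,2,4} :: nat \<Rightarrow> 'k chain set) m)"
proof -
  have n: "10 < n" using assms(1) by simp
  show ?thesis
    using homology_iso_field_Omega_eig_one_0[OF n] homology_iso_field_Omega_eig_one_1[OF n]
      homology_zero_Omega_eig_0[OF n] homology_zero_Omega_eig_1[OF n] homology_zero_Omega_eig_ge2[OF n]
      homology_iso_field_Omega_0[OF n] homology_iso_field_Omega_1[OF n] homology_zero_Omega_ge2[OF n]
    by auto
qed

end
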